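(* Let $(B,\mathbb{T},\omega)$ be a $C^*$-dynamical system with $B\subset B(H)$ for a Hilbert space $H$, and let $A$ be a maximal (abelian $\mathbb{T}$-invariant $*$-subalgebra) of $B$. Then $A'\cap B\subset A''$.
   Context: A $C^*$-dynamical system $(B,\mathbb{T},\omega)$: $B$ a $C^*$-algebra, $\omega:\mathbb{T}\to\mathrm{Aut}(B)$ a homomorphism with $t\mapsto\omega_t(b)$ norm-continuous for each $b$. A maximal (abelian $\mathbb{T}$-invariant $*$-subalgebra) is a $*$-subalgebra which is abelian, satisfies $\omega_t(A)\subset A$ for all $t$, and is maximal among such. $A'$ and $A''$ denote the commutant and bicommutant of $A$ in $B(H)$. *)

theory Defs
  imports "HOL-Analysis.Analysis"
begin

text \<open>A complex Hilbert space H is modelled as a real Hilbert space (type 'h of class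
real_inner and complete_space) together with an orthogonal complex structure J
(multiplication by i); the real inner product is the real part of the complex one.
Bounded complex-linear operators on H are the bounded real-linear operators commuting with J.\<close>

definition cstruct :: "('h::real_inner \<Rightarrow> 'h) \<Rightarrow> bool" where
  "cstruct J \<longleftrightarrow> bounded_linear J \<and> (\<forall>x. J (J x) = - x) \<and> (\<forall>x y. inner (J x) (J y) = inner x y)"

definition BH :: "('h::real_inner \<Rightarrow> 'h) \<Rightarrow> ('h \<Rightarrow>\<^sub>L 'h) set" where
  "BH J = {T. \<forall>x. blinfun_apply T (J x) = J (blinfun_apply T x)}"

definition cscale :: "('h::real_inner \<Rightarrow> 'h) \<Rightarrow> complex \<Rightarrow> ('h \<Rightarrow>\<^sub>L 'h) \<Rightarrow> ('h \<Rightarrow>\<^sub>L 'h)" where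
  "cscale J c T = Re c *\<^sub>R T + Im c *\<^sub>R (Blinfun J o\<^sub>L T)"

definition is_adj :: "('h::real_inner \<Rightarrow>\<^sub>L 'h) \<Rightarrow> ('h \<Rightarrow>\<^sub>L 'h) \<Rightarrow> bool" where
  "is_adj T S \<longleftrightarrow> (\<forall>x y. inner (blinfun_apply T x) y = inner x (blinfun_apply S y))"

definition star_subalg :: "('h::real_inner \<Rightarrow> 'h) \<Rightarrow> ('h \<Rightarrow>\<^sub>L 'h) set \<Rightarrow> bool" where
  "star_subalg J A \<longleftrightarrow> A \<subseteq> BH J \<and> 0 \<in> A
     \<and> (\<forall>a\<in>A. \<forall>b\<in>A. a + b \<in> A \<and> a o\<^sub>L b \<in> A)
     \<and> (\<forall>c a. a \<in> A \<longrightarrow> cscale J c a \<in> A)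
     \<and> (\<forall>a\<in>A. \<exists>s\<in>A. is_adj a s)"

definition concrete_cstar :: "('h::real_inner \<Rightarrow> 'h) \<Rightarrow> ('h \<Rightarrow>\<^sub>L 'h) set \<Rightarrow> bool" where
  "concrete_cstar J B \<longleftrightarrow> star_subalg J B \<and> closed B"

definition star_automorphism ::
  "('h::real_inner \<Rightarrow> 'h) \<Rightarrow> ('h \<Rightarrow>\<^sub>L 'h) set \<Rightarrow> (('h \<Rightarrow>\<^sub>L 'h) \<Rightarrow> ('h \<Rightarrow>\<^sub>L 'h)) \<Rightarrow> bool" where
  "star_automorphism J B \<alpha> \<longleftrightarrow> bij_betw \<alpha> B B
     \<and> (\<forall>a\<in>B. \<forall>b\<in>B. \<alpha> (a + b) = \<alpha> a + \<alpha> b \<and> \<alpha> (a o\<^sub>L b) = \<alpha> a o\<^sub>L \<alpha> b)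
     \<and> (\<forall>c. \<forall>a\<in>B. \<alpha> (cscale J c a) = cscale J c (\<alpha> a))
     \<and> (\<forall>a\<in>B. \<forall>s\<in>B. is_adj a s \<longrightarrow> is_adj (\<alpha> a) (\<alpha> s))"

text \<open>C*-dynamical system (B, T, \<omega>): the circle group T = R/2\<pi>Z is parametrised by
real t, with \<omega> 2\<pi>-periodic; \<omega> is a homomorphism into Aut(B), pointwise norm-continuous.\<close>
definition cstar_dyn_system ::
  "('h::real_inner \<Rightarrow> 'h) \<Rightarrow> ('h \<Rightarrow>\<^sub>L 'h) set \<Rightarrow> (real \<Rightarrow> ('h \<Rightarrow>\<^sub>L 'h) \<Rightarrow> ('h \<Rightarrow>\<^sub>L 'h)) \<Rightarrow> bool" where
  "cstar_dyn_system J B \<omega> \<longleftrightarrow> concrete_cstar J B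
     \<and> (\<forall>t. star_automorphism J B (\<omega> t))
     \<and> (\<forall>b\<in>B. \<omega> 0 b = b)
     \<and> (\<forall>s t. \<forall>b\<in>B. \<omega> (s + t) b = \<omega> s (\<omega> t b))
     \<and> (\<forall>t. \<forall>b\<in>B. \<omega> (t + 2 * pi) b = \<omega> t b)
     \<and> (\<forall>b\<in>B. continuous_on UNIV (\<lambda>t. \<omega> t b))"

definition abelian_inv_subalg ::
  "('h::real_inner \<Rightarrow> 'h) \<Rightarrow> ('h \<Rightarrow>\<^sub>L 'h) set \<Rightarrow> (real \<Rightarrow> ('h \<Rightarrow>\<^sub>L 'h) \<Rightarrow> ('h \<Rightarrow>\<^sub>L 'h))
    \<Rightarrow> ('h \<Rightarrow>\<^sub>L 'h) set \<Rightarrow> bool" where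
  "abelian_inv_subalg J B \<omega> A \<longleftrightarrow> star_subalg J A \<and> A \<subseteq> B
     \<and> (\<forall>a\<in>A. \<forall>b\<in>A. a o\<^sub>L b = b o\<^sub>L a)
     \<and> (\<forall>t. \<omega> t ` A \<subseteq> A)"

definition maximal_abelian_inv_subalg ::
  "('h::real_inner \<Rightarrow> 'h) \<Rightarrow> ('h \<Rightarrow>\<^sub>L 'h) set \<Rightarrow> (real \<Rightarrow> ('h \<Rightarrow>\<^sub>L 'h) \<Rightarrow> ('h \<Rightarrow>\<^sub>L 'h))
    \<Rightarrow> ('h \<Rightarrow>\<^sub>L 'h) set \<Rightarrow> bool" where
  "maximal_abelian_inv_subalg J B \<omega> A \<longleftrightarrow> abelian_inv_subalg J B \<omega> A
     \<and> (\<forall>C. abelian_inv_subalg J B \<omega> C \<and> A \<subseteq> C \<longrightarrow> C = A)"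

definition commutant :: "('h::real_inner \<Rightarrow> 'h) \<Rightarrow> ('h \<Rightarrow>\<^sub>L 'h) set \<Rightarrow> ('h \<Rightarrow>\<^sub>L 'h) set" where
  "commutant J S = {T \<in> BH J. \<forall>a\<in>S. T o\<^sub>L a = a o\<^sub>L T}"

end

theory Submission
  imports Defs "HOL-Library.Periodic_Fun"
begin

text \<open>
  Let \<open>x \<in> A' \<inter> B\<close> and let \<open>x\<^sub>n = \<integral>\<^sub>0\<^sup>2\<^sup>\<pi> e\<^sup>-\<^sup>i\<^sup>n\<^sup>t \<omega>\<^sub>t(x) dt\<close> be its Fourier components.
  They lie in \<open>B\<close>, commute with \<open>A\<close> (because \<open>\<omega>\<^sub>t(A) = A\<close>) and satisfy
  \<open>\<omega>\<^sub>s(x\<^sub>n) = e\<^sup>i\<^sup>n\<^sup>s x\<^sub>n\<close>. Hence \<open>x\<^sub>n\<^sup>* x\<^sub>n\<close> and \<open>x\<^sub>n x\<^sub>n\<^sup>*\<close> are invariant self-adjoint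
  elements commuting with \<open>A\<close>, so they belong to \<open>A\<close> by maximality. Then \<open>x\<^sub>n\<close>
  commutes with \<open>x\<^sub>n\<^sup>* x\<^sub>n\<close> and \<open>x\<^sub>n x\<^sub>n\<^sup>*\<close>, which forces \<open>x\<^sub>n\<close> to be normal
  (Kleinecke--Shirokov), and maximality once more gives \<open>x\<^sub>n \<in> A\<close>. So every \<open>y \<in> A'\<close>
  commutes with all \<open>x\<^sub>n\<close>: all Fourier coefficients of the continuous periodic function
  \<open>t \<mapsto> \<langle>[\<omega>\<^sub>t(x), y] u, v\<rangle>\<close> vanish, hence so does the function, and \<open>t = 0\<close> gives \<open>xy = yx\<close>.

  Moving \<open>\<omega>\<^sub>s\<close> under the integral needs \<open>\<omega>\<^sub>s\<close> to be bounded; this is the contractivity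
  of \<open>*\<close>-automorphisms, proved by writing \<open>1 - h = (1 - k)\<^sup>2\<close> for self-adjoint \<open>h\<close>
  of norm \<open>< 1\<close>.
\<close>

lemma bounded_linear_pointwise_limit_Cauchy:
  fixes X :: "nat \<Rightarrow> 'a::real_normed_vector \<Rightarrow>\<^sub>L 'b::real_normed_vector"
  assumes "Cauchy X" and v: "\<And>x. (\<lambda>n. X n x) \<longlonglongrightarrow> v x"
  shows "bounded_linear v"
proof
  show "v (x + y) = v x + v y" for x y
    using tendsto_add[OF v[of x] v[of y]] LIMSEQ_unique[OF v[of "x + y"]]
    by (simp add: blinfun.add_right)
  show "v (r *\<^sub>R x) = r *\<^sub>R v x" for r x
    using tendsto_scaleR[OF tendsto_const v[of x]] LIMSEQ_unique[OF v[of "r *\<^sub>R x"]]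
    by (simp add: blinfun.scaleR_right)
  obtain K where K: "\<And>n. norm (X n) \<le> K"
    using Cauchy_Bseq[OF \<open>Cauchy X\<close>] unfolding Bseq_def by auto
  have "norm (v x) \<le> norm x * K" for x
    using K norm_blinfun[of "X _" x]
    by (intro Lim_bounded[OF tendsto_norm[OF v[of x]], of 0])
      (metis mult.commute mult_left_mono norm_ge_zero order_trans)
  then show "\<exists>K. \<forall>x. norm (v x) \<le> norm x * K"
    by blast
qed

lemma tendsto_pointwise_limit_Cauchy:
  fixes X :: "nat \<Rightarrow> 'a::real_normed_vector \<Rightarrow>\<^sub>L 'b::real_normed_vector"
  assumes "Cauchy X" and v: "\<And>x. (\<lambda>n. X n x) \<longlonglongrightarrow> v x"
  shows "X \<longlonglongrightarrow> Blinfun v"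
proof (rule LIMSEQ_I)
  fix e :: real assume "0 < e"
  then obtain M where M: "\<And>m n. m \<ge> M \<Longrightarrow> n \<ge> M \<Longrightarrow> norm (X m - X n) < e / 2"
    using CauchyD[OF \<open>Cauchy X\<close>, of "e / 2"] by auto
  have "norm (X n - Blinfun v) \<le> e / 2" if "n \<ge> M" for n
  proof (rule norm_blinfun_bound)
    fix x
    have "norm (X n x - X m x) \<le> e / 2 * norm x" if "m \<ge> M" for m
    proof -
      have "norm (X n x - X m x) \<le> norm (X n - X m) * norm x"
        using norm_blinfun[of "X n - X m" x] by (simp add: blinfun.diff_left)
      also have "\<dots> \<le> e / 2 * norm x"
        using M[OF \<open>n \<ge> M\<close> that] by (intro mult_right_mono) auto
      finally show ?thesis .
    qed
    moreover have "(\<lambda>m. norm (X n x - X m x)) \<longlonglongrightarrow> norm (X n x - v x)"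
      by (intro tendsto_intros v)
    ultimately have "norm (X n x - v x) \<le> e / 2 * norm x"
      by (intro Lim_bounded[of _ _ M]) auto
    then show "norm ((X n - Blinfun v) x) \<le> e / 2 * norm x"
      by (simp add: blinfun.diff_left bounded_linear_Blinfun_apply[OF bounded_linear_pointwise_limit_Cauchy[OF assms]])
  qed (use \<open>0 < e\<close> in simp)
  moreover have "e / 2 < e"
    using \<open>0 < e\<close> by simp
  ultimately show "\<exists>M. \<forall>n\<ge>M. norm (X n - Blinfun v) < e"
    by (blast intro: le_less_trans)
qed

lemma Cauchy_blinfun_convergent:
  fixes X :: "nat \<Rightarrow> 'a::real_normed_vector \<Rightarrow>\<^sub>L 'b::{real_normed_vector, complete_space}"
  assumes "Cauchy X"
  shows "convergent X"
proof -
  have "convergent (\<lambda>n. X n x)" for x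
    using bounded_linear.Cauchy[OF blinfun.bounded_linear_left assms] by (rule Cauchy_convergent)
  then obtain v where "\<And>x. (\<lambda>n. X n x) \<longlonglongrightarrow> v x"
    unfolding convergent_def by metis
  then show ?thesis
    using tendsto_pointwise_limit_Cauchy[OF assms] unfolding convergent_def by blast
qed

text \<open>The library instance needs a codomain of sort \<open>banach\<close>, which \<open>{real_inner, complete_space}\<close>
  does not entail.\<close>
instance blinfun :: (real_normed_vector, "{real_normed_vector, complete_space}") banach
  by standard (rule Cauchy_blinfun_convergent)

interpretation blinfun_compose: bounded_bilinear blinfun_compose
  by (rule bounded_bilinear_blinfun_compose)

lemma blinfun_compose_assoc: "(a o\<^sub>L b) o\<^sub>L c = a o\<^sub>L (b o\<^sub>L c)"
  by (rule blinfun_eqI) simp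

lemma blinfun_compose_id [simp]: "id_blinfun o\<^sub>L T = T" "T o\<^sub>L id_blinfun = T"
  by (auto intro: blinfun_eqI)

section \<open>Adjoints and the complex structure\<close>

lemma is_adj_unique: "is_adj T S \<Longrightarrow> is_adj T S' \<Longrightarrow> S = S'"
  unfolding is_adj_def by (metis blinfun_eqI vector_eq_ldot)

lemma is_adj_sym: "is_adj T S \<Longrightarrow> is_adj S T"
  unfolding is_adj_def by (metis inner_commute)

lemma is_adj_compose: "is_adj T S \<Longrightarrow> is_adj T' S' \<Longrightarrow> is_adj (T o\<^sub>L T') (S' o\<^sub>L S)"
  unfolding is_adj_def by simp

lemma is_adj_add: "is_adj T S \<Longrightarrow> is_adj T' S' \<Longrightarrow> is_adj (T + T') (S + S')"
  unfolding is_adj_def by (simp add: blinfun.add_left inner_add_left inner_add_right)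

lemma is_adj_diff: "is_adj T S \<Longrightarrow> is_adj T' S' \<Longrightarrow> is_adj (T - T') (S - S')"
  unfolding is_adj_def by (simp add: blinfun.diff_left inner_diff_left inner_diff_right)

lemma is_adj_scaleR: "is_adj T S \<Longrightarrow> is_adj (r *\<^sub>R T) (r *\<^sub>R S)"
  unfolding is_adj_def by (simp add: blinfun.scaleR_left)

lemma is_adj_zero: "is_adj 0 0"
  unfolding is_adj_def by simp

lemma is_adj_selfadjoint_compose: "is_adj T S \<Longrightarrow> is_adj (S o\<^sub>L T) (S o\<^sub>L T)"
  using is_adj_compose is_adj_sym by blast

context
  fixes J :: "'h::real_inner \<Rightarrow> 'h"
  assumes J: "cstruct J"
begin

lemma cstruct_bounded_linear: "bounded_linear J"
  using J unfolding cstruct_def by auto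

lemma cstruct_J_J [simp]: "J (J x) = - x"
  using J unfolding cstruct_def by auto

lemmas cstruct_linear_simps [simp] = linear_simps[OF cstruct_bounded_linear]

lemma cstruct_inner_left: "inner (J x) y = - inner x (J y)"
  using J unfolding cstruct_def by (metis cstruct_J_J inner_minus_left)

lemma BH_is_adj:
  assumes T: "T \<in> BH J" and adj: "is_adj T S"
  shows "S \<in> BH J"
  unfolding BH_def
proof safe
  fix y
  have "inner x (S (J y)) = inner x (J (S y))" for x
  proof -
    have "inner x (S (J y)) = - inner (J (T x)) y"
      using adj by (simp add: is_adj_def cstruct_inner_left)
    also have "\<dots> = - inner (J x) (S y)"
      using T adj unfolding BH_def is_adj_def by (metis (mono_tags, lifting) mem_Collect_eq)
    also have "\<dots> = inner x (J (S y))"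
      by (simp add: cstruct_inner_left)
    finally show ?thesis .
  qed
  then show "S (J y) = J (S y)"
    using vector_eq_ldot by blast
qed

lemma cscale_apply: "cscale J c T x = Re c *\<^sub>R T x + Im c *\<^sub>R J (T x)"
  unfolding cscale_def
  by (simp add: bounded_linear_Blinfun_apply[OF cstruct_bounded_linear] blinfun.add_left blinfun.scaleR_left)

lemma is_adj_cscale:
  assumes T: "T \<in> BH J" and adj: "is_adj T S"
  shows "is_adj (cscale J c T) (cscale J (cnj c) S)"
proof -
  have "S \<in> BH J"
    using BH_is_adj[OF T adj] .
  then have "inner (J (T x)) y = - inner x (J (S y))" for x y
    using adj by (simp add: cstruct_inner_left is_adj_def BH_def)
  then show ?thesis
    using adj by (simp add: is_adj_def cscale_apply inner_add_left inner_add_right inner_diff_right)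
qed

lemma cscale_compose_left: "cscale J c T o\<^sub>L S = cscale J c (T o\<^sub>L S)"
  by (rule blinfun_eqI) (simp add: cscale_apply)

lemma compose_cscale_right: "S \<in> BH J \<Longrightarrow> S o\<^sub>L cscale J c T = cscale J c (S o\<^sub>L T)"
  by (rule blinfun_eqI) (simp add: cscale_apply BH_def blinfun.add_right blinfun.scaleR_right)

lemma cscale_cscale: "cscale J c (cscale J d T) = cscale J (c * d) T"
  by (rule blinfun_eqI) (simp add: cscale_apply algebra_simps)

end

lemma cscale_of_real: "cscale J (complex_of_real r) T = r *\<^sub>R T"
  unfolding cscale_def by simp

lemma cscale_one: "cscale J 1 T = T"
  unfolding cscale_def by simp

lemma norm_power2_le_norm_adj_compose:
  assumes adj: "is_adj T S"
  shows "norm T ^ 2 \<le> norm (S o\<^sub>L T)"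
proof -
  have "norm (T u) \<le> sqrt (norm (S o\<^sub>L T)) * norm u" for u
  proof -
    have "norm (T u) ^ 2 = inner u (S (T u))"
      using adj by (simp add: is_adj_def power2_norm_eq_inner)
    also have "\<dots> \<le> norm u * (norm (S o\<^sub>L T) * norm u)"
      using Cauchy_Schwarz_ineq2[of u "S (T u)"] norm_blinfun[of "S o\<^sub>L T" u]
      by (smt (verit, best) mult_left_mono norm_ge_zero blinfun_apply_blinfun_compose)
    also have "\<dots> = (sqrt (norm (S o\<^sub>L T)) * norm u) ^ 2"
      by (simp add: power2_eq_square)
    finally show ?thesis
      using power2_le_imp_le by fastforce
  qed
  then have "norm T \<le> sqrt (norm (S o\<^sub>L T))"
    by (intro norm_blinfun_bound) auto
  then show ?thesis
    by (metis norm_ge_zero power_mono real_sqrt_pow2)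
qed

lemma is_adj_norm_eq:
  fixes T S :: "'a::real_inner \<Rightarrow>\<^sub>L 'a"
  assumes "is_adj T S"
  shows "norm S = norm T"
proof -
  have "norm T \<le> norm S" if "is_adj T S" for T S :: "'a \<Rightarrow>\<^sub>L 'a"
  proof -
    have "norm T ^ 2 \<le> norm S * norm T"
      using norm_power2_le_norm_adj_compose[OF that] norm_blinfun_compose[of S T] by linarith
    then show ?thesis
      by (cases "norm T = 0") (auto simp: power2_eq_square)
  qed
  then show ?thesis
    using assms is_adj_sym by (metis order_antisym)
qed

lemma norm_selfadjoint_le:
  assumes adj: "is_adj T T" and "0 \<le> c" and numerical_range: "\<And>u. \<bar>inner (T u) u\<bar> \<le> c * inner u u"
  shows "norm T \<le> c"
proof (rule norm_blinfun_bound[OF \<open>0 \<le> c\<close>])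
  fix u
  have "4 * inner (T u) v \<le> 2 * c * (inner u u + inner v v)" for v
  proof -
    have "4 * inner (T u) v = inner (T (u + v)) (u + v) - inner (T (u - v)) (u - v)"
      using adj[unfolded is_adj_def, rule_format, of v u]
      by (simp add: blinfun.add_right blinfun.diff_right inner_add_left inner_add_right
          inner_diff_left inner_diff_right inner_commute)
    also have "\<dots> \<le> c * inner (u + v) (u + v) + c * inner (u - v) (u - v)"
      using numerical_range[of "u + v"] numerical_range[of "u - v"] by linarith
    also have "\<dots> = 2 * c * (inner u u + inner v v)"
      by (simp add: inner_add_left inner_add_right inner_diff_left inner_diff_right algebra_simps inner_commute)
    finally show ?thesis .
  qed
  \<comment> \<open>Test with \<open>v\<close> the multiple of \<open>T u\<close> of the same norm as \<open>u\<close>.\<close>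
  from this[of "(norm u / norm (T u)) *\<^sub>R T u"]
  have "4 * (norm u * norm (T u)) \<le> 2 * c * (2 * norm u ^ 2)" if "T u \<noteq> 0"
    using that by (simp add: power2_norm_eq_inner[symmetric] power2_eq_square)
  then show "norm (T u) \<le> c * norm u"
    using \<open>0 \<le> c\<close> by (cases "T u = 0 \<or> u = 0") (auto simp: power2_eq_square)
qed

lemma closed_selfadjoint: "closed {T :: 'a::real_inner \<Rightarrow>\<^sub>L 'a. is_adj T T}"
proof -
  have "{T :: 'a \<Rightarrow>\<^sub>L 'a. is_adj T T} = (\<Inter>x. \<Inter>y. {T. inner (blinfun_apply T x) y = inner x (blinfun_apply T y)})"
    unfolding is_adj_def by auto
  moreover have "closed {T :: 'a \<Rightarrow>\<^sub>L 'a. inner (blinfun_apply T x) y = inner x (blinfun_apply T y)}" for x y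
    by (intro closed_Collect_eq continuous_intros)
  ultimately show ?thesis
    by (auto intro!: closed_INT)
qed

lemma norm_compose_self_diff_le:
  "norm ((x o\<^sub>L x) - (y o\<^sub>L y)) \<le> (norm x + norm y) * norm (x - y)"
proof -
  have "(x o\<^sub>L x) - (y o\<^sub>L y) = (x o\<^sub>L (x - y)) + ((x - y) o\<^sub>L y)"
    by (simp add: blinfun_compose.diff_left blinfun_compose.diff_right)
  also have "norm \<dots> \<le> norm x * norm (x - y) + norm (x - y) * norm y"
    by (intro norm_triangle_le add_mono norm_blinfun_compose)
  finally show ?thesis
    by (simp add: algebra_simps)
qed

section \<open>Contractivity of \<open>*\<close>-automorphisms\<close>

locale cstar_algebra =
  fixes J :: "'h::{real_inner, complete_space} \<Rightarrow> 'h" and B :: "('h \<Rightarrow>\<^sub>L 'h) set"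
  assumes J: "cstruct J" and B: "concrete_cstar J B"
begin

lemma B_subset_BH: "B \<subseteq> BH J"
  using B unfolding concrete_cstar_def star_subalg_def by auto

lemma B_zero: "0 \<in> B"
  using B unfolding concrete_cstar_def star_subalg_def by auto

lemma B_add: "a \<in> B \<Longrightarrow> b \<in> B \<Longrightarrow> a + b \<in> B"
  using B unfolding concrete_cstar_def star_subalg_def by auto

lemma B_compose: "a \<in> B \<Longrightarrow> b \<in> B \<Longrightarrow> a o\<^sub>L b \<in> B"
  using B unfolding concrete_cstar_def star_subalg_def by auto

lemma B_cscale: "a \<in> B \<Longrightarrow> cscale J c a \<in> B"
  using B unfolding concrete_cstar_def star_subalg_def by auto

lemma B_adj: "a \<in> B \<Longrightarrow> \<exists>s\<in>B. is_adj a s"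
  using B unfolding concrete_cstar_def star_subalg_def by auto

lemma B_closed: "closed B"
  using B unfolding concrete_cstar_def by auto

lemma B_scaleR: "a \<in> B \<Longrightarrow> r *\<^sub>R a \<in> B"
  using B_cscale[of a "complex_of_real r"] by (simp add: cscale_of_real)

lemma B_subspace: "subspace B"
  unfolding subspace_def using B_zero B_add B_scaleR by auto

text \<open>
  The equation \<open>h + k\<^sup>2 = 2k\<close> says \<open>1 - h = (1 - k)\<^sup>2\<close> without requiring \<open>1 \<in> B\<close>.
  The solution \<open>k\<close> is the fixed point of the contraction \<open>k \<mapsto> (h + k\<^sup>2)/2\<close> on the
  self-adjoint elements of \<open>B\<close> of norm at most \<open>(1 + \<parallel>h\<parallel>)/2\<close>.
\<close>
lemma one_minus_square_root_exists:
  assumes h: "h \<in> B" "is_adj h h" "norm h < 1"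
  shows "\<exists>k\<in>B. is_adj k k \<and> h + (k o\<^sub>L k) = 2 *\<^sub>R k"
proof -
  define \<rho> where "\<rho> = (1 + norm h) / 2"
  have \<rho>: "0 \<le> \<rho>" "\<rho> < 1" "norm h = 2 * \<rho> - 1"
    using h(3) by (auto simp: \<rho>_def field_simps)
  define S where "S = {k \<in> B. is_adj k k \<and> norm k \<le> \<rho>}"
  define f where "f k = (1 / 2 :: real) *\<^sub>R (h + (k o\<^sub>L k))" for k
  have "\<exists>!k\<in>S. f k = k"
  proof (rule Banach_fix)
    have "S = B \<inter> {k. is_adj k k} \<inter> cball 0 \<rho>"
      by (auto simp: S_def)
    then show "complete S"
      using B_closed closed_selfadjoint by (auto intro: complete_eq_closed[THEN iffD2])
    show "S \<noteq> {}"
      using B_zero \<rho> is_adj_zero by (auto simp: S_def)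
    show "0 \<le> \<rho>" "\<rho> < 1" by fact+
    show "f ` S \<subseteq> S"
    proof safe
      fix k assume "k \<in> S"
      then have k: "k \<in> B" "is_adj k k" "norm k \<le> \<rho>"
        by (auto simp: S_def)
      have "norm (h + (k o\<^sub>L k)) \<le> norm h + norm k * norm k"
        by (intro norm_triangle_le add_left_mono norm_blinfun_compose)
      also have "\<dots> \<le> norm h + 1"
        using k(3) \<rho> by (intro add_left_mono mult_le_one) auto
      also have "\<dots> = 2 * \<rho>"
        using \<rho>(3) by simp
      finally show "f k \<in> S"
        using h k by (auto simp: S_def f_def B_scaleR B_add B_compose intro: is_adj_scaleR is_adj_add is_adj_compose)
    qed
    fix x y assume "x \<in> S" "y \<in> S"
    then have "norm x + norm y \<le> 2 * \<rho>"
      by (simp add: S_def)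
    then have "norm ((x o\<^sub>L x) - (y o\<^sub>L y)) \<le> 2 * \<rho> * norm (x - y)"
      by (meson norm_compose_self_diff_le mult_right_mono norm_ge_zero order_trans)
    then show "dist (f x) (f y) \<le> \<rho> * dist x y"
      by (simp add: f_def dist_norm flip: scaleR_diff_right)
  qed
  then obtain k where "k \<in> S" "f k = k"
    by auto
  moreover have "h + (k o\<^sub>L k) = 2 *\<^sub>R f k"
    by (simp add: f_def)
  ultimately show ?thesis
    by (auto simp: S_def)
qed

context
  fixes \<alpha> :: "('h \<Rightarrow>\<^sub>L 'h) \<Rightarrow> ('h \<Rightarrow>\<^sub>L 'h)"
  assumes \<alpha>: "star_automorphism J B \<alpha>"
begin

lemma aut_closed: "a \<in> B \<Longrightarrow> \<alpha> a \<in> B"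
  using \<alpha> unfolding star_automorphism_def bij_betw_def by auto

lemma aut_add: "a \<in> B \<Longrightarrow> b \<in> B \<Longrightarrow> \<alpha> (a + b) = \<alpha> a + \<alpha> b"
  using \<alpha> unfolding star_automorphism_def by auto

lemma aut_compose: "a \<in> B \<Longrightarrow> b \<in> B \<Longrightarrow> \<alpha> (a o\<^sub>L b) = \<alpha> a o\<^sub>L \<alpha> b"
  using \<alpha> unfolding star_automorphism_def by auto

lemma aut_cscale: "a \<in> B \<Longrightarrow> \<alpha> (cscale J c a) = cscale J c (\<alpha> a)"
  using \<alpha> unfolding star_automorphism_def by auto

lemma aut_is_adj: "a \<in> B \<Longrightarrow> s \<in> B \<Longrightarrow> is_adj a s \<Longrightarrow> is_adj (\<alpha> a) (\<alpha> s)"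
  using \<alpha> unfolding star_automorphism_def by auto

lemma aut_scaleR: "a \<in> B \<Longrightarrow> \<alpha> (r *\<^sub>R a) = r *\<^sub>R \<alpha> a"
  using aut_cscale[of a "complex_of_real r"] by (simp add: cscale_of_real)

lemma aut_inner_le:
  assumes h: "h \<in> B" "is_adj h h" "norm h < 1"
  shows "inner (\<alpha> h u) u \<le> inner u u"
proof -
  obtain k where k: "k \<in> B" "is_adj k k" "h + (k o\<^sub>L k) = 2 *\<^sub>R k"
    using one_minus_square_root_exists[OF h] by blast
  define K where "K = \<alpha> k"
  have "is_adj K K"
    unfolding K_def using aut_is_adj k by blast
  have "\<alpha> h + (K o\<^sub>L K) = 2 *\<^sub>R K"
    using arg_cong[OF k(3), of \<alpha>] h(1) k(1)
    by (simp add: K_def aut_add aut_compose aut_scaleR B_compose)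
  then have "\<alpha> h = 2 *\<^sub>R K - (K o\<^sub>L K)"
    by (simp add: eq_diff_eq)
  then have "inner (\<alpha> h u) u = 2 * inner (K u) u - inner (K (K u)) u"
    by (simp add: blinfun.diff_left blinfun.scaleR_left inner_diff_left)
  also have "\<dots> = inner u u - inner (u - K u) (u - K u)"
    using \<open>is_adj K K\<close>[unfolded is_adj_def, rule_format, of "K u" u]
    by (simp add: inner_diff_left inner_diff_right inner_commute)
  also have "\<dots> \<le> inner u u"
    by simp
  finally show ?thesis .
qed

lemma aut_abs_inner_le:
  assumes h: "h \<in> B" "is_adj h h" "norm h < 1"
  shows "\<bar>inner (\<alpha> h u) u\<bar> \<le> inner u u"
proof -
  have "(- 1) *\<^sub>R h \<in> B" "is_adj ((- 1) *\<^sub>R h) ((- 1) *\<^sub>R h)" "norm ((- 1) *\<^sub>R h) < 1"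
    using h by (auto simp only: B_scaleR is_adj_scaleR norm_scaleR)
  from aut_inner_le[OF this, of u] have "- inner (\<alpha> h u) u \<le> inner u u"
    unfolding aut_scaleR[OF h(1)] by (simp add: blinfun.minus_left)
  with aut_inner_le[OF h, of u] show ?thesis
    by (simp add: abs_le_iff)
qed

lemma aut_selfadjoint_norm_le:
  assumes h: "h \<in> B" "is_adj h h"
  shows "norm (\<alpha> h) \<le> norm h"
proof (rule field_le_epsilon)
  fix e :: real assume "0 < e"
  define c where "c = norm h + e"
  have c: "0 < c" "norm h < c"
    using \<open>0 < e\<close> by (auto simp: c_def add_nonneg_pos)
  have "\<bar>inner (\<alpha> h u) u\<bar> \<le> c * inner u u" for u
  proof -
    have "\<bar>inner (\<alpha> ((1 / c) *\<^sub>R h) u) u\<bar> \<le> inner u u"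
      using h c by (intro aut_abs_inner_le) (auto simp: B_scaleR is_adj_scaleR divide_less_eq)
    then have "\<bar>inner (\<alpha> h u) u\<bar> / c \<le> inner u u"
      using c unfolding aut_scaleR[OF h(1)] by (simp add: blinfun.scaleR_left abs_of_pos)
    then show ?thesis
      using c by (simp add: pos_divide_le_eq mult.commute)
  qed
  then have "norm (\<alpha> h) \<le> c"
    using aut_is_adj[OF h(1) h(1) h(2)] c by (intro norm_selfadjoint_le) auto
  then show "norm (\<alpha> h) \<le> norm h + e"
    by (simp add: c_def)
qed

lemma aut_norm_le:
  assumes a: "a \<in> B"
  shows "norm (\<alpha> a) \<le> norm a"
proof -
  obtain s where s: "s \<in> B" "is_adj a s"
    using B_adj[OF a] by blast
  have "norm (\<alpha> a) ^ 2 \<le> norm (\<alpha> s o\<^sub>L \<alpha> a)"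
    by (rule norm_power2_le_norm_adj_compose[OF aut_is_adj[OF a s]])
  also have "\<dots> = norm (\<alpha> (s o\<^sub>L a))"
    using aut_compose[OF s(1) a] by simp
  also have "\<dots> \<le> norm (s o\<^sub>L a)"
    by (rule aut_selfadjoint_norm_le[OF B_compose[OF s(1) a] is_adj_selfadjoint_compose[OF s(2)]])
  also have "\<dots> \<le> norm a ^ 2"
    using norm_blinfun_compose[of s a] is_adj_norm_eq[OF s(2)] by (simp add: power2_eq_square)
  finally show ?thesis
    by (rule power2_le_imp_le) simp
qed

end

end

section \<open>Normality by the Kleinecke--Shirokov argument\<close>

primrec blinfun_pow :: "('a::real_normed_vector \<Rightarrow>\<^sub>L 'a) \<Rightarrow> nat \<Rightarrow> ('a \<Rightarrow>\<^sub>L 'a)" where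
  "blinfun_pow T 0 = id_blinfun"
| "blinfun_pow T (Suc n) = T o\<^sub>L blinfun_pow T n"

lemma blinfun_pow_commute:
  assumes "T o\<^sub>L S = S o\<^sub>L T"
  shows "T o\<^sub>L blinfun_pow S n = blinfun_pow S n o\<^sub>L T"
proof (induction n)
  case 0
  then show ?case by simp
next
  case (Suc n)
  have "T o\<^sub>L blinfun_pow S (Suc n) = S o\<^sub>L (T o\<^sub>L blinfun_pow S n)"
    using assms by (simp flip: blinfun_compose_assoc)
  then show ?case
    using Suc by (simp add: blinfun_compose_assoc)
qed

lemma blinfun_pow_add: "blinfun_pow T (m + n) = blinfun_pow T m o\<^sub>L blinfun_pow T n"
  by (induction m) (simp_all add: blinfun_compose_assoc)

lemma norm_blinfun_pow_le: "norm (blinfun_pow T n) \<le> norm T ^ n"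
proof (induction n)
  case 0
  then show ?case using norm_blinfun_id_le by simp
next
  case (Suc n)
  then show ?case
    using norm_blinfun_compose[of T "blinfun_pow T n"]
    by (simp add: order_trans[OF _ mult_left_mono])
qed

lemma is_adj_blinfun_pow: "is_adj E E \<Longrightarrow> is_adj (blinfun_pow E n) (blinfun_pow E n)"
proof (induction n)
  case 0
  then show ?case by (simp add: is_adj_def)
next
  case (Suc n)
  then show ?case
    using is_adj_compose[OF Suc.prems Suc.IH] blinfun_pow_commute[of E E n] by simp
qed

lemma norm_power_le_norm_blinfun_pow:
  assumes "is_adj E E"
  shows "norm E ^ (2 ^ m) \<le> norm (blinfun_pow E (2 ^ m))"
proof (induction m)
  case 0
  then show ?case by simp
next
  case (Suc m)
  have "norm E ^ (2 ^ Suc m) = (norm E ^ (2 ^ m))\<^sup>2"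
    by (simp flip: power_mult add: mult.commute)
  also have "\<dots> \<le> norm (blinfun_pow E (2 ^ m)) ^ 2"
    using Suc by (intro power_mono) auto
  also have "\<dots> \<le> norm (blinfun_pow E (2 ^ m) o\<^sub>L blinfun_pow E (2 ^ m))"
    by (rule norm_power2_le_norm_adj_compose[OF is_adj_blinfun_pow[OF assms]])
  also have "blinfun_pow E (2 ^ m) o\<^sub>L blinfun_pow E (2 ^ m) = blinfun_pow E (2 ^ Suc m)"
    by (simp add: mult_2 flip: blinfun_pow_add)
  finally show ?case .
qed

text \<open>For self-adjoint \<open>E\<close> the norms of the powers grow like \<open>\<parallel>E\<parallel>\<^sup>k\<close> along \<open>k = 2\<^sup>m\<close>,
  which is incompatible with the factorial decay unless \<open>E = 0\<close>.\<close>
lemma selfadjoint_eq_0_if_factorial_bound: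
  assumes E: "is_adj E E" and bound: "\<And>k. fact k * norm (blinfun_pow E k) \<le> c ^ k"
  shows "E = 0"
proof (rule ccontr)
  assume "E \<noteq> 0"
  define q where "q = c / norm E"
  have "(\<lambda>n. inverse (fact n) * q ^ n) \<longlonglongrightarrow> 0"
    by (rule summable_LIMSEQ_zero[OF summable_exp])
  from LIMSEQ_D[OF this, of 1]
  obtain N where N: "\<And>n. n \<ge> N \<Longrightarrow> norm (inverse (fact n) * q ^ n) < 1"
    by auto
  define K :: nat where "K = 2 ^ N"
  have "N \<le> K"
    unfolding K_def using less_exp[of N] by linarith
  have "fact K * norm E ^ K \<le> fact K * norm (blinfun_pow E K)"
    unfolding K_def using norm_power_le_norm_blinfun_pow[OF E] by (intro mult_left_mono) auto
  also have "\<dots> \<le> c ^ K"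
    by (rule bound)
  finally have "1 \<le> inverse (fact K) * q ^ K"
    using \<open>E \<noteq> 0\<close> by (simp add: q_def power_divide field_simps)
  with N[OF \<open>N \<le> K\<close>] show False
    by simp
qed

definition commutator :: "('a::real_normed_vector \<Rightarrow>\<^sub>L 'a) \<Rightarrow> ('a \<Rightarrow>\<^sub>L 'a) \<Rightarrow> ('a \<Rightarrow>\<^sub>L 'a)" where
  "commutator x y = (x o\<^sub>L y) - (y o\<^sub>L x)"

lemma commutator_compose:
  "commutator x (P o\<^sub>L Q) = (commutator x P o\<^sub>L Q) + (P o\<^sub>L commutator x Q)"
  by (rule blinfun_eqI) (simp add: commutator_def blinfun.diff_left blinfun.add_left blinfun.diff_right)

lemma commutator_scaleR_left: "commutator (r *\<^sub>R x) P = r *\<^sub>R commutator x P"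
  and commutator_scaleR_right: "commutator x (r *\<^sub>R P) = r *\<^sub>R commutator x P"
  by (simp_all add: commutator_def blinfun_compose.scaleR_left blinfun_compose.scaleR_right scaleR_diff_right)

lemma norm_iterated_commutator_le: "norm ((commutator x ^^ k) y) \<le> (2 * norm x) ^ k * norm y"
proof (induction k)
  case 0
  then show ?case by simp
next
  case (Suc k)
  have "norm (commutator x z) \<le> 2 * norm x * norm z" for z
  proof -
    have "norm (commutator x z) \<le> norm (x o\<^sub>L z) + norm (z o\<^sub>L x)"
      by (simp add: commutator_def norm_triangle_ineq4)
    also have "\<dots> \<le> norm x * norm z + norm z * norm x"
      by (intro add_mono norm_blinfun_compose)
    finally show ?thesis
      by (simp add: algebra_simps)
  qed
  then have "norm ((commutator x ^^ Suc k) y) \<le> 2 * norm x * norm ((commutator x ^^ k) y)"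
    by simp
  also have "\<dots> \<le> 2 * norm x * ((2 * norm x) ^ k * norm y)"
    using Suc by (intro mult_left_mono) auto
  finally show ?case
    by (simp add: ac_simps)
qed

lemma commutator_blinfun_pow:
  assumes "s o\<^sub>L commutator x s = commutator x s o\<^sub>L s"
  shows "commutator x (blinfun_pow s (Suc m)) = real (Suc m) *\<^sub>R (blinfun_pow s m o\<^sub>L commutator x s)"
proof (induction m)
  case 0
  then show ?case by simp
next
  case (Suc m)
  let ?E = "commutator x s"
  have "commutator x (blinfun_pow s (Suc (Suc m)))
      = (?E o\<^sub>L blinfun_pow s (Suc m)) + (s o\<^sub>L commutator x (blinfun_pow s (Suc m)))"
    by (simp only: blinfun_pow.simps(2)[of s "Suc m"] commutator_compose)
  also have "\<dots> = (blinfun_pow s (Suc m) o\<^sub>L ?E) + real (Suc m) *\<^sub>R (s o\<^sub>L (blinfun_pow s m o\<^sub>L ?E))"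
    using blinfun_pow_commute[OF assms[symmetric], of "Suc m"]
    by (simp only: Suc blinfun_compose.scaleR_right)
  also have "s o\<^sub>L (blinfun_pow s m o\<^sub>L ?E) = blinfun_pow s (Suc m) o\<^sub>L ?E"
    by (simp add: blinfun_compose_assoc)
  also have "(blinfun_pow s (Suc m) o\<^sub>L ?E) + real (Suc m) *\<^sub>R (blinfun_pow s (Suc m) o\<^sub>L ?E)
      = real (Suc (Suc m)) *\<^sub>R (blinfun_pow s (Suc m) o\<^sub>L ?E)"
    by (simp add: scaleR_add_left scaleR_2)
  finally show ?case .
qed

lemma iterated_commutator_blinfun_pow:
  assumes "x o\<^sub>L commutator x s = commutator x s o\<^sub>L x" and "s o\<^sub>L commutator x s = commutator x s o\<^sub>L s"
  shows "(commutator x ^^ j) (blinfun_pow s (m + j))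
    = (fact (m + j) / fact m) *\<^sub>R (blinfun_pow s m o\<^sub>L blinfun_pow (commutator x s) j)"
proof (induction j arbitrary: m)
  case 0
  then show ?case by simp
next
  case (Suc j)
  have powers_commute: "commutator x (blinfun_pow (commutator x s) j) = 0"
    using blinfun_pow_commute[OF assms(1), of j] by (simp add: commutator_def)
  have step: "commutator x (blinfun_pow s (Suc m) o\<^sub>L blinfun_pow (commutator x s) j)
      = real (Suc m) *\<^sub>R (blinfun_pow s m o\<^sub>L blinfun_pow (commutator x s) (Suc j))"
    unfolding commutator_compose[of x "blinfun_pow s (Suc m)"]
    by (simp only: commutator_blinfun_pow[OF assms(2)] powers_commute blinfun_compose_zero
        add_0_right blinfun_compose.scaleR_left blinfun_compose_assoc) (simp only: blinfun_pow.simps(2))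
  have "(commutator x ^^ Suc j) (blinfun_pow s (m + Suc j))
      = commutator x ((commutator x ^^ j) (blinfun_pow s (Suc m + j)))"
    by simp
  also have "\<dots> = (fact (Suc m + j) / fact (Suc m) * real (Suc m)) *\<^sub>R
          (blinfun_pow s m o\<^sub>L blinfun_pow (commutator x s) (Suc j))"
    by (simp only: Suc commutator_scaleR_right step scaleR_scaleR)
  also have "fact (Suc m + j) / fact (Suc m) * real (Suc m) = (fact (m + Suc j) / fact m :: real)"
    by (simp add: fact_Suc[of m] del: fact_Suc)
  finally show ?case .
qed

lemma Kleinecke_Shirokov_bound:
  assumes "x o\<^sub>L commutator x s = commutator x s o\<^sub>L x" and "s o\<^sub>L commutator x s = commutator x s o\<^sub>L s"
  shows "fact k * norm (blinfun_pow (commutator x s) k) \<le> (2 * norm x * norm s) ^ k"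
proof -
  have "fact k * norm (blinfun_pow (commutator x s) k) = norm ((commutator x ^^ k) (blinfun_pow s k))"
    using iterated_commutator_blinfun_pow[OF assms, of k 0] by simp
  also have "\<dots> \<le> (2 * norm x) ^ k * norm (blinfun_pow s k)"
    by (rule norm_iterated_commutator_le)
  also have "\<dots> \<le> (2 * norm x) ^ k * norm s ^ k"
    by (intro mult_left_mono norm_blinfun_pow_le) simp
  finally show ?thesis
    by (simp add: power_mult_distrib)
qed

text \<open>The self-adjoint commutator \<open>[x, x\<^sup>*]\<close> then commutes with \<open>x\<close> and \<open>x\<^sup>*\<close>, so the
  Kleinecke--Shirokov bound forces it to vanish.\<close>
lemma normal_if_commutes_with_products:
  fixes x s :: "'a::real_inner \<Rightarrow>\<^sub>L 'a"
  assumes adj: "is_adj x s"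
    and comm_sx: "x o\<^sub>L (s o\<^sub>L x) = (s o\<^sub>L x) o\<^sub>L x" and comm_xs: "x o\<^sub>L (x o\<^sub>L s) = (x o\<^sub>L s) o\<^sub>L x"
  shows "x o\<^sub>L s = s o\<^sub>L x"
proof -
  have adj_sx: "is_adj (s o\<^sub>L x) (s o\<^sub>L x)" and adj_xs: "is_adj (x o\<^sub>L s) (x o\<^sub>L s)"
    using adj is_adj_selfadjoint_compose is_adj_sym by blast+
  have "s o\<^sub>L (s o\<^sub>L x) = (s o\<^sub>L x) o\<^sub>L s"
    using comm_sx is_adj_compose[OF adj adj_sx] is_adj_compose[OF adj_sx adj] is_adj_unique by metis
  moreover have "s o\<^sub>L (x o\<^sub>L s) = (x o\<^sub>L s) o\<^sub>L s"
    using comm_xs is_adj_compose[OF adj adj_xs] is_adj_compose[OF adj_xs adj] is_adj_unique by metis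
  ultimately have "x o\<^sub>L commutator x s = commutator x s o\<^sub>L x"
    and "s o\<^sub>L commutator x s = commutator x s o\<^sub>L s"
    using comm_sx comm_xs
    by (simp_all add: commutator_def blinfun_compose.diff_left blinfun_compose.diff_right)
  from Kleinecke_Shirokov_bound[OF this]
  have "commutator x s = 0"
    using is_adj_diff[OF adj_xs adj_sx] unfolding commutator_def
    by (intro selfadjoint_eq_0_if_factorial_bound) (auto simp: commutator_def)
  then show ?thesis
    by (simp add: commutator_def)
qed

section \<open>Integrals with values in a closed subspace\<close>

lemma Riemann_sum_in_subspace:
  assumes "subspace S" "\<D> tagged_division_of {a..b}" "\<And>t. t \<in> {a..b} \<Longrightarrow> f t \<in> S"
  shows "(\<Sum>(x, k)\<in>\<D>. Henstock_Kurzweil_Integration.content k *\<^sub>R f x) \<in> S"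
proof -
  have "f x \<in> S" if "(x, k) \<in> \<D>" for x k
    using assms(3) tagged_division_ofD(2,3)[OF assms(2) that] by auto
  then show ?thesis
    using assms(1) by (auto intro!: subspace_sum subspace_scale)
qed

lemma has_integral_in_closed_subspace:
  fixes f :: "real \<Rightarrow> 'v::real_normed_vector"
  assumes S: "subspace S" "closed S" and I: "(f has_integral I) {a..b}"
    and f: "\<And>t. t \<in> {a..b} \<Longrightarrow> f t \<in> S"
  shows "I \<in> S"
proof -
  have "\<exists>y\<in>S. dist y I < e" if e: "0 < e" for e
  proof -
    obtain \<gamma> where "gauge \<gamma>" and \<gamma>: "\<forall>\<D>. \<D> tagged_division_of {a..b} \<and> \<gamma> fine \<D> \<longrightarrow>
        norm ((\<Sum>(x, k)\<in>\<D>. Henstock_Kurzweil_Integration.content k *\<^sub>R f x) - I) < e"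
      using has_integral_real[THEN iffD1, OF I, rule_format, OF e] by (elim exE conjE)
    obtain \<D> where \<D>: "\<D> tagged_division_of {a..b}" "\<gamma> fine \<D>"
      using fine_division_exists_real[OF \<open>gauge \<gamma>\<close>] by blast
    show ?thesis
      using \<gamma> \<D> Riemann_sum_in_subspace[OF S(1) \<D>(1) f] by (auto simp: dist_norm)
  qed
  then show ?thesis
    using closed_approachable[OF S(2)] by blast
qed

lemma additive_on_sum:
  assumes "subspace S" and add: "\<And>x y. x \<in> S \<Longrightarrow> y \<in> S \<Longrightarrow> L (x + y) = L x + L y"
    and "L 0 = 0" and "finite D" and "\<And>d. d \<in> D \<Longrightarrow> g d \<in> S"
  shows "L (sum g D) = (\<Sum>d\<in>D. L (g d))"
  using \<open>finite D\<close> assms(5)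
proof (induction D rule: finite_induct)
  case empty
  then show ?case using \<open>L 0 = 0\<close> by simp
next
  case (insert d D)
  then show ?case
    using add[of "g d" "sum g D"] subspace_sum[OF \<open>subspace S\<close>, of D g] by simp
qed

lemma additive_on_Riemann_sum:
  fixes f :: "real \<Rightarrow> 'v::real_normed_vector" and L :: "'v \<Rightarrow> 'w::real_normed_vector"
  assumes "subspace S" and add: "\<And>x y. x \<in> S \<Longrightarrow> y \<in> S \<Longrightarrow> L (x + y) = L x + L y"
    and scale: "\<And>r x. x \<in> S \<Longrightarrow> L (r *\<^sub>R x) = r *\<^sub>R L x"
    and \<D>: "\<D> tagged_division_of {a..b}" and f: "\<And>t. t \<in> {a..b} \<Longrightarrow> f t \<in> S"
  shows "L (\<Sum>(x, k)\<in>\<D>. Henstock_Kurzweil_Integration.content k *\<^sub>R f x) = (\<Sum>(x, k)\<in>\<D>. Henstock_Kurzweil_Integration.content k *\<^sub>R L (f x))"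
proof -
  have tags: "f x \<in> S" if "(x, k) \<in> \<D>" for x k
    using f tagged_division_ofD(2,3)[OF \<D> that] by auto
  have "L 0 = 0"
    using scale[of 0 0] \<open>subspace S\<close> by (simp add: subspace_0)
  have "L (\<Sum>(x, k)\<in>\<D>. Henstock_Kurzweil_Integration.content k *\<^sub>R f x) = (\<Sum>(x, k)\<in>\<D>. L (Henstock_Kurzweil_Integration.content k *\<^sub>R f x))"
    using \<D> tags \<open>subspace S\<close>
    by (subst additive_on_sum[OF \<open>subspace S\<close> add \<open>L 0 = 0\<close>]) (auto simp: subspace_scale case_prod_beta)
  also have "\<dots> = (\<Sum>(x, k)\<in>\<D>. Henstock_Kurzweil_Integration.content k *\<^sub>R L (f x))"
    using tags by (intro sum.cong) (auto simp: scale)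
  finally show ?thesis .
qed

lemma has_integral_linear_on:
  fixes f :: "real \<Rightarrow> 'v::real_normed_vector" and L :: "'v \<Rightarrow> 'w::real_normed_vector"
  assumes S: "subspace S" "closed S" and I: "(f has_integral I) {a..b}"
    and f: "\<And>t. t \<in> {a..b} \<Longrightarrow> f t \<in> S"
    and add: "\<And>x y. x \<in> S \<Longrightarrow> y \<in> S \<Longrightarrow> L (x + y) = L x + L y"
    and scale: "\<And>r x. x \<in> S \<Longrightarrow> L (r *\<^sub>R x) = r *\<^sub>R L x"
    and bounded: "\<And>x. x \<in> S \<Longrightarrow> norm (L x) \<le> C * norm x"
  shows "((\<lambda>t. L (f t)) has_integral L I) {a..b}"
  unfolding has_integral_real
proof (intro allI impI)
  fix e :: real assume "0 < e"
  define K where "K = \<bar>C\<bar> + 1"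
  have "0 < K" and K: "\<And>x. x \<in> S \<Longrightarrow> norm (L x) \<le> K * norm x"
    unfolding K_def using bounded by (fastforce intro: order_trans mult_right_mono)+
  have "I \<in> S"
    by (rule has_integral_in_closed_subspace[OF S I f])
  obtain \<gamma> where "gauge \<gamma>" and \<gamma>: "\<forall>\<D>. \<D> tagged_division_of {a..b} \<and> \<gamma> fine \<D> \<longrightarrow>
      norm ((\<Sum>(x, k)\<in>\<D>. Henstock_Kurzweil_Integration.content k *\<^sub>R f x) - I) < e / K"
    using has_integral_real[THEN iffD1, OF I, rule_format, of "e / K"] \<open>0 < e\<close> \<open>0 < K\<close>
    by (auto elim!: exE conjE)
  show "\<exists>\<gamma>. gauge \<gamma> \<and> (\<forall>\<D>. \<D> tagged_division_of {a..b} \<and> \<gamma> fine \<D> \<longrightarrow>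
      norm ((\<Sum>(x, k)\<in>\<D>. Henstock_Kurzweil_Integration.content k *\<^sub>R L (f x)) - L I) < e)"
  proof (intro exI conjI allI impI)
    fix \<D> assume \<D>: "\<D> tagged_division_of {a..b} \<and> \<gamma> fine \<D>"
    define R where "R = (\<Sum>(x, k)\<in>\<D>. Henstock_Kurzweil_Integration.content k *\<^sub>R f x)"
    have R: "R \<in> S"
      unfolding R_def using \<D> by (intro Riemann_sum_in_subspace[OF S(1) _ f]) auto
    have "L R = (\<Sum>(x, k)\<in>\<D>. Henstock_Kurzweil_Integration.content k *\<^sub>R L (f x))"
      unfolding R_def using \<D> by (intro additive_on_Riemann_sum[OF S(1) add scale _ f]) auto
    moreover have "L R - L I = L (R - I)"
      using add[of "R - I" I] R \<open>I \<in> S\<close> S(1) by (simp add: subspace_diff)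
    moreover have "norm (L (R - I)) < e"
    proof -
      have "norm (L (R - I)) \<le> K * norm (R - I)"
        using R \<open>I \<in> S\<close> S(1) by (intro K subspace_diff)
      also have "\<dots> < K * (e / K)"
        using \<gamma> \<D> \<open>0 < K\<close> unfolding R_def by (intro mult_strict_left_mono) auto
      finally show ?thesis
        using \<open>0 < K\<close> by simp
    qed
    ultimately show "norm ((\<Sum>(x, k)\<in>\<D>. Henstock_Kurzweil_Integration.content k *\<^sub>R L (f x)) - L I) < e"
      by simp
  qed (fact \<open>gauge \<gamma>\<close>)
qed

lemma integral_shift_periodic_le:
  fixes G :: "real \<Rightarrow> 'v::banach"
  assumes cont: "continuous_on UNIV G" and per: "\<And>t. G (t + p) = G t" and s: "0 \<le> s" "s \<le> p"
  shows "integral {0..p} (\<lambda>t. G (t + s)) = integral {0..p} G"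
proof -
  have integrable: "G integrable_on {a..b}" for a b
    by (rule integrable_continuous_real) (rule continuous_on_subset[OF cont], simp)
  have "integral {0..p} (\<lambda>t. G (t + s)) = integral {0 + s..p + s} G"
    using integral_shift_Icc_real[of 0 p G s] by (simp add: o_def add.commute)
  also have "\<dots> = integral {s..p} G + integral {p..p + s} G"
    using s integrable by (simp add: Henstock_Kurzweil_Integration.integral_combine)
  also have "integral {p..p + s} G = integral {0..s} G"
    using integral_shift_Icc_real[of 0 s G p] per by (simp add: o_def add.commute)
  also have "integral {s..p} G + integral {0..s} G = integral {0..p} G"
    using s integrable Henstock_Kurzweil_Integration.integral_combine[of 0 s p G] by (simp add: add.commute)
  finally show ?thesis .
qed

lemma integral_shift_periodic:
  fixes G :: "real \<Rightarrow> 'v::banach"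
  assumes cont: "continuous_on UNIV G" and per: "\<And>t. G (t + p) = G t" and "0 < p"
  shows "integral {0..p} (\<lambda>t. G (t + s)) = integral {0..p} G"
proof -
  interpret periodic_fun_simple G p
    using per by unfold_locales
  define s0 where "s0 = s - of_int \<lfloor>s / p\<rfloor> * p"
  have "0 \<le> s0" "s0 \<le> p"
    using \<open>0 < p\<close> floor_divide_lower[of p s] floor_divide_upper[of p s]
    by (auto simp: s0_def algebra_simps)
  moreover have "G (t + s) = G (t + s0)" for t
    using plus_of_int[of "t + s0" "\<lfloor>s / p\<rfloor>"] by (simp add: s0_def)
  ultimately show ?thesis
    using integral_shift_periodic_le[OF cont per] by simp
qed

section \<open>Uniqueness of Fourier coefficients\<close>

inductive_set trig_poly :: "(real \<Rightarrow> real) set" where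
  cos: "(\<lambda>t. cos (real_of_int n * t)) \<in> trig_poly"
| sin: "(\<lambda>t. sin (real_of_int n * t)) \<in> trig_poly"
| add: "f \<in> trig_poly \<Longrightarrow> g \<in> trig_poly \<Longrightarrow> (\<lambda>t. f t + g t) \<in> trig_poly"
| scale: "f \<in> trig_poly \<Longrightarrow> (\<lambda>t. c * f t) \<in> trig_poly"

lemma trig_poly_const: "(\<lambda>t. c) \<in> trig_poly"
  using trig_poly.scale[OF trig_poly.cos[of 0], of c] by simp

lemma trig_poly_half_add: "f \<in> trig_poly \<Longrightarrow> g \<in> trig_poly \<Longrightarrow> (\<lambda>t. (f t + g t) / 2) \<in> trig_poly"
  using trig_poly.scale[OF trig_poly.add, of f g "1 / 2"] by simp

lemma trig_poly_half_diff: "f \<in> trig_poly \<Longrightarrow> g \<in> trig_poly \<Longrightarrow> (\<lambda>t. (f t - g t) / 2) \<in> trig_poly"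
  using trig_poly.scale[OF trig_poly.add[OF _ trig_poly.scale[of g "-1"]], of f "1 / 2"] by simp

lemma trig_poly_basis_products:
  "(\<lambda>t. cos (real_of_int n * t) * cos (real_of_int m * t)) \<in> trig_poly"
  "(\<lambda>t. sin (real_of_int n * t) * sin (real_of_int m * t)) \<in> trig_poly"
  "(\<lambda>t. cos (real_of_int n * t) * sin (real_of_int m * t)) \<in> trig_poly"
  "(\<lambda>t. sin (real_of_int n * t) * cos (real_of_int m * t)) \<in> trig_poly"
proof -
  have diff: "real_of_int n * t - real_of_int m * t = real_of_int (n - m) * t"
    and sum: "real_of_int n * t + real_of_int m * t = real_of_int (n + m) * t" for t
    by (simp_all add: algebra_simps)
  show "(\<lambda>t. cos (real_of_int n * t) * cos (real_of_int m * t)) \<in> trig_poly"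
    "(\<lambda>t. sin (real_of_int n * t) * sin (real_of_int m * t)) \<in> trig_poly"
    "(\<lambda>t. cos (real_of_int n * t) * sin (real_of_int m * t)) \<in> trig_poly"
    "(\<lambda>t. sin (real_of_int n * t) * cos (real_of_int m * t)) \<in> trig_poly"
    unfolding cos_times_cos sin_times_sin cos_times_sin sin_times_cos diff sum
    by (intro trig_poly_half_add trig_poly_half_diff trig_poly.cos trig_poly.sin)+
qed

lemma trig_poly_mult_cos_sin:
  assumes "g \<in> trig_poly"
  shows "(\<lambda>t. cos (real_of_int n * t) * g t) \<in> trig_poly \<and> (\<lambda>t. sin (real_of_int n * t) * g t) \<in> trig_poly"
  using assms
proof induction
  case (add f g)
  then show ?case
    using trig_poly.add[of "\<lambda>t. cos (real_of_int n * t) * f t" "\<lambda>t. cos (real_of_int n * t) * g t"]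
      trig_poly.add[of "\<lambda>t. sin (real_of_int n * t) * f t" "\<lambda>t. sin (real_of_int n * t) * g t"]
    by (simp add: distrib_left)
next
  case (scale f c)
  then show ?case
    using trig_poly.scale[of "\<lambda>t. cos (real_of_int n * t) * f t" c]
      trig_poly.scale[of "\<lambda>t. sin (real_of_int n * t) * f t" c]
    by (simp add: ac_simps)
qed (simp_all add: trig_poly_basis_products)

lemma trig_poly_mult:
  assumes "f \<in> trig_poly" and "g \<in> trig_poly"
  shows "(\<lambda>t. f t * g t) \<in> trig_poly"
  using assms(1)
proof induction
  case (add f1 f2)
  then show ?case
    using trig_poly.add[OF add.IH] by (simp add: distrib_right)
next
  case (scale f c)
  then show ?case
    using trig_poly.scale[OF scale.IH, of c] by (simp add: ac_simps)
qed (simp_all add: trig_poly_mult_cos_sin[OF assms(2)])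

lemma trig_poly_polynomial_cis:
  assumes "real_polynomial_function P"
  shows "(\<lambda>t. P (cis t)) \<in> trig_poly"
  using assms
proof induction
  case (linear f)
  have "f (cis t) = f 1 * cos (real_of_int 1 * t) + f \<i> * sin (real_of_int 1 * t)" for t
  proof -
    have "cis t = cos t *\<^sub>R 1 + sin t *\<^sub>R \<i>"
      by (simp add: complex_eq_iff)
    then show ?thesis
      using linear.hyps by (simp add: linear_simps mult.commute)
  qed
  then show ?case
    by (simp only:) (intro trig_poly.add trig_poly.scale trig_poly.cos trig_poly.sin)
qed (auto intro: trig_poly_const trig_poly.add trig_poly_mult)

lemma continuous_on_trig_poly: "f \<in> trig_poly \<Longrightarrow> continuous_on UNIV f"
  by (induction rule: trig_poly.induct) (auto intro!: continuous_intros)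

context
  fixes \<phi> :: "real \<Rightarrow> real"
  assumes cont: "continuous_on UNIV \<phi>" and per: "\<And>t. \<phi> (t + 2 * pi) = \<phi> t"
begin

lemma continuous_on_periodic: "continuous_on S \<phi>"
  using continuous_on_subset[OF cont subset_UNIV] .

lemma periodic_cis_cong: "cis a = cis b \<Longrightarrow> \<phi> a = \<phi> b"
proof -
  interpret periodic_fun_simple \<phi> "2 * pi"
    using per by unfold_locales
  assume "cis a = cis b"
  then have "sin a = sin b \<and> cos a = cos b"
    by (simp add: complex_eq_iff)
  then obtain n :: int where "a = b + 2 * pi * n"
    using sin_cos_eq_iff by blast
  then show ?thesis
    using plus_of_int[of b n] by (simp add: mult.commute)
qed

lemma periodic_Arg_cis: "\<phi> (Arg (cis t)) = \<phi> t"
  using cis_Arg[of "cis t"] by (intro periodic_cis_cong) (simp add: sgn_div_norm)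

text \<open>\<open>Arg\<close> jumps on the negative real axis; there \<open>\<phi> \<circ> Arg\<close> agrees with the continuous
  function \<open>z \<mapsto> \<phi> (Arg (-z) + \<pi>)\<close>.\<close>
lemma continuous_on_sphere_periodic_Arg: "continuous_on (sphere 0 1) (\<lambda>z. \<phi> (Arg z))"
  unfolding continuous_on_eq_continuous_within
proof
  fix z :: complex assume z: "z \<in> sphere 0 1"
  have \<phi>: "isCont \<phi> r" for r
    using cont by (simp add: continuous_on_eq_continuous_at)
  show "continuous (at z within sphere 0 1) (\<lambda>z. \<phi> (Arg z))"
  proof (cases "z \<in> \<real>\<^sub>\<le>\<^sub>0")
    case False
    have "continuous (at z) (\<lambda>w. \<phi> (Arg w))"
      using continuous_at_compose[OF continuous_at_Arg[OF False] \<phi>] by (simp add: o_def)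
    then show ?thesis
      by (rule continuous_at_imp_continuous_at_within)
  next
    case True
    then have "- z \<notin> \<real>\<^sub>\<le>\<^sub>0"
      using z by (auto simp: nonpos_Reals_def)
    have "isCont (\<lambda>w. Arg (- w)) z"
      using continuous_at_compose[OF continuous_minus[OF continuous_ident] continuous_at_Arg]
        \<open>- z \<notin> \<real>\<^sub>\<le>\<^sub>0\<close> by (simp add: o_def)
    then have "continuous (at z) (\<lambda>w. \<phi> (Arg (- w) + pi))"
      using continuous_at_compose[OF continuous_add[OF _ continuous_const] \<phi>] by (simp add: o_def)
    then have "continuous (at z within sphere 0 1) (\<lambda>w. \<phi> (Arg (- w) + pi))"
      by (rule continuous_at_imp_continuous_at_within)
    then show ?thesis
    proof (rule continuous_transform_within[of _ _ _ 1])
      fix w :: complex assume "w \<in> sphere 0 1"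
      then have "w \<noteq> 0"
        by auto
      have "cis (Arg (- w) + pi) = - sgn (- w)"
        using cis_Arg[of "- w"] \<open>w \<noteq> 0\<close> by (simp add: cis_mult[symmetric] cis_pi)
      also have "\<dots> = cis (Arg w)"
        using cis_Arg[OF \<open>w \<noteq> 0\<close>] by (simp add: sgn_minus)
      finally show "\<phi> (Arg (- w) + pi) = \<phi> (Arg w)"
        by (rule periodic_cis_cong)
    qed (use z in auto)
  qed
qed

lemma integrable_mult_periodic:
  assumes "continuous_on UNIV f"
  shows "(\<lambda>t. f t * \<phi> t) integrable_on {a..b}"
  by (intro integrable_continuous_real continuous_intros continuous_on_periodic
      continuous_on_subset[OF assms subset_UNIV])

context
  assumes cos_coeff: "\<And>n. integral {0..2*pi} (\<lambda>t. cos (real_of_int n * t) * \<phi> t) = 0"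
    and sin_coeff: "\<And>n. integral {0..2*pi} (\<lambda>t. sin (real_of_int n * t) * \<phi> t) = 0"
begin

lemma trig_poly_orthogonal: "f \<in> trig_poly \<Longrightarrow> integral {0..2*pi} (\<lambda>t. f t * \<phi> t) = 0"
proof (induction rule: trig_poly.induct)
  case (add f g)
  have "integral {0..2*pi} (\<lambda>t. (f t + g t) * \<phi> t)
      = integral {0..2*pi} (\<lambda>t. f t * \<phi> t) + integral {0..2*pi} (\<lambda>t. g t * \<phi> t)"
    using add.hyps by (simp add: distrib_right integral_add integrable_mult_periodic continuous_on_trig_poly)
  then show ?case
    using add.IH by simp
next
  case (scale f c)
  then show ?case
    by (simp add: mult.assoc)
qed (simp_all add: cos_coeff sin_coeff)

text \<open>By Stone--Weierstrass on the circle, \<open>\<phi>\<close> is uniformly approximated by trigonometric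
  polynomials, which are orthogonal to \<open>\<phi>\<close>.\<close>
lemma periodic_integral_square_le:
  assumes "0 < e"
  shows "integral {0..2*pi} (\<lambda>t. \<phi> t * \<phi> t) \<le> e * integral {0..2*pi} (\<lambda>t. \<bar>\<phi> t\<bar>)"
proof -
  obtain P where P: "polynomial_function P"
    and approx: "\<And>z. z \<in> sphere (0::complex) 1 \<Longrightarrow> norm (\<phi> (Arg z) - P z) < e"
    using Stone_Weierstrass_polynomial_function[OF compact_sphere continuous_on_sphere_periodic_Arg \<open>0 < e\<close>]
    by blast
  define p where "p t = P (cis t)" for t
  have "p \<in> trig_poly"
    unfolding p_def[abs_def] using P by (intro trig_poly_polynomial_cis) (simp add: real_polynomial_function_eq)
  have p_approx: "\<bar>\<phi> t - p t\<bar> < e" for t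
    using approx[of "cis t"] by (simp add: periodic_Arg_cis p_def)
  have integrable: "(\<lambda>t. \<phi> t * \<phi> t) integrable_on {0..2*pi}" "(\<lambda>t. p t * \<phi> t) integrable_on {0..2*pi}"
      "(\<lambda>t. \<bar>\<phi> t\<bar>) integrable_on {0..2*pi}"
    by (intro integrable_mult_periodic cont continuous_on_trig_poly[OF \<open>p \<in> trig_poly\<close>]
        integrable_continuous_real continuous_intros continuous_on_periodic)+
  have "integral {0..2*pi} (\<lambda>t. \<phi> t * \<phi> t)
      = integral {0..2*pi} (\<lambda>t. \<phi> t * \<phi> t - p t * \<phi> t)"
    using integrable trig_poly_orthogonal[OF \<open>p \<in> trig_poly\<close>] by (simp add: integral_diff)
  also have "\<dots> \<le> integral {0..2*pi} (\<lambda>t. e * \<bar>\<phi> t\<bar>)"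
  proof (rule integral_le)
    show "(\<lambda>t. \<phi> t * \<phi> t - p t * \<phi> t) integrable_on {0..2*pi}"
      using integrable by (intro integrable_diff)
    show "(\<lambda>t. e * \<bar>\<phi> t\<bar>) integrable_on {0..2*pi}"
      using integrable_cmul[OF integrable(3), of e] by simp
    fix t
    have "\<phi> t * \<phi> t - p t * \<phi> t \<le> \<bar>\<phi> t - p t\<bar> * \<bar>\<phi> t\<bar>"
      by (metis abs_ge_self abs_mult left_diff_distrib)
    also have "\<dots> \<le> e * \<bar>\<phi> t\<bar>"
      using p_approx[of t] by (intro mult_right_mono) auto
    finally show "\<phi> t * \<phi> t - p t * \<phi> t \<le> e * \<bar>\<phi> t\<bar>" .
  qed
  also have "\<dots> = e * integral {0..2*pi} (\<lambda>t. \<bar>\<phi> t\<bar>)"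
    by simp
  finally show ?thesis .
qed

lemma periodic_eq_0_if_Fourier_coefficients_eq_0:
  assumes "t \<in> {0..2*pi}"
  shows "\<phi> t = 0"
proof -
  define Q where "Q = integral {0..2*pi} (\<lambda>t. \<phi> t * \<phi> t)"
  define K where "K = integral {0..2*pi} (\<lambda>t. \<bar>\<phi> t\<bar>)"
  have "Q \<le> 0"
  proof (rule field_le_epsilon)
    fix e :: real assume "0 < e"
    have "0 \<le> K"
      unfolding K_def
      by (rule integral_nonneg) (auto intro!: integrable_continuous_real continuous_intros continuous_on_periodic)
    then have "0 < e / (K + 1)"
      using \<open>0 < e\<close> by simp
    then have "Q \<le> e / (K + 1) * K"
      unfolding Q_def K_def by (rule periodic_integral_square_le)
    also have "\<dots> \<le> e"
      using \<open>0 < e\<close> \<open>0 \<le> K\<close> by (simp add: field_simps)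
    finally show "Q \<le> 0 + e"
      by simp
  qed
  moreover have "0 \<le> Q"
    unfolding Q_def by (rule integral_nonneg) (simp_all add: integrable_mult_periodic[OF cont])
  moreover have "continuous_on {0..2*pi} (\<lambda>t. \<phi> t * \<phi> t)"
    by (intro continuous_intros continuous_on_periodic)
  ultimately have "\<forall>x\<in>{0..2*pi}. \<phi> x * \<phi> x = 0"
    using integral_eq_0_iff[of 0 "2 * pi" "\<lambda>t. \<phi> t * \<phi> t"] by (simp add: Q_def)
  then show ?thesis
    using assms by simp
qed

end

end

section \<open>Maximal abelian invariant subalgebras\<close>

inductive_set subalg_generated :: "('h::real_inner \<Rightarrow> 'h) \<Rightarrow> ('h \<Rightarrow>\<^sub>L 'h) set \<Rightarrow> ('h \<Rightarrow>\<^sub>L 'h) set"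
  for J G where
  base: "g \<in> G \<Longrightarrow> g \<in> subalg_generated J G"
| add: "a \<in> subalg_generated J G \<Longrightarrow> b \<in> subalg_generated J G \<Longrightarrow> a + b \<in> subalg_generated J G"
| compose: "a \<in> subalg_generated J G \<Longrightarrow> b \<in> subalg_generated J G \<Longrightarrow> a o\<^sub>L b \<in> subalg_generated J G"
| cscale: "a \<in> subalg_generated J G \<Longrightarrow> cscale J c a \<in> subalg_generated J G"

lemma subalg_generated_commute:
  assumes J: "cstruct J" and "a \<in> BH J" and "\<And>g. g \<in> G \<Longrightarrow> a o\<^sub>L g = g o\<^sub>L a"
    and "c \<in> subalg_generated J G"
  shows "a o\<^sub>L c = c o\<^sub>L a"
  using assms(4)
proof induction
  case (base g)
  then show ?case using assms(3) by blast
next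
  case (add b c)
  then show ?case
    by (simp add: blinfun_compose.add_left blinfun_compose.add_right)
next
  case (compose b c)
  then show ?case
    by (metis blinfun_compose_assoc)
next
  case (cscale b c)
  then show ?case
    by (simp add: compose_cscale_right[OF J \<open>a \<in> BH J\<close>] cscale_compose_left[OF J])
qed

lemma subalg_generated_pairwise_commute:
  assumes J: "cstruct J" and BH: "subalg_generated J G \<subseteq> BH J"
    and commute: "\<And>g h. g \<in> G \<Longrightarrow> h \<in> G \<Longrightarrow> g o\<^sub>L h = h o\<^sub>L g"
    and a: "a \<in> subalg_generated J G" and c: "c \<in> subalg_generated J G"
  shows "a o\<^sub>L c = c o\<^sub>L a"
proof (rule subalg_generated_commute[OF J _ _ c])
  show "a \<in> BH J"
    using BH a by blast
  show "a o\<^sub>L g = g o\<^sub>L a" if "g \<in> G" for g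
  proof -
    have "g \<in> BH J"
      using BH subalg_generated.base[OF that] by blast
    then show ?thesis
      using subalg_generated_commute[OF J _ commute[OF that] a] by simp
  qed
qed

lemma subalg_generated_is_adj:
  assumes J: "cstruct J" and BH: "subalg_generated J G \<subseteq> BH J"
    and adj: "\<And>g. g \<in> G \<Longrightarrow> \<exists>s\<in>G. is_adj g s" and "c \<in> subalg_generated J G"
  shows "\<exists>s\<in>subalg_generated J G. is_adj c s"
  using assms(4)
proof induction
  case (base g)
  then show ?case
    using adj subalg_generated.base by blast
next
  case (add a b)
  then show ?case
    using is_adj_add subalg_generated.add by blast
next
  case (compose a b)
  then show ?case
    using is_adj_compose subalg_generated.compose by blast
next
  case (cscale a c)
  then show ?case
    using is_adj_cscale[OF J] BH subalg_generated.cscale by blast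
qed

lemma (in cstar_algebra) subalg_generated_subset:
  assumes "G \<subseteq> B"
  shows "subalg_generated J G \<subseteq> B"
proof
  fix c assume "c \<in> subalg_generated J G"
  then show "c \<in> B"
    by induction (use assms in \<open>auto intro: B_add B_compose B_cscale\<close>)
qed

locale cstar_dynamical_system = cstar_algebra J B for J :: "'h::{real_inner, complete_space} \<Rightarrow> 'h" and B +
  fixes \<omega> :: "real \<Rightarrow> ('h \<Rightarrow>\<^sub>L 'h) \<Rightarrow> ('h \<Rightarrow>\<^sub>L 'h)" and A :: "('h \<Rightarrow>\<^sub>L 'h) set"
  assumes dynamics: "cstar_dyn_system J B \<omega>" and A: "maximal_abelian_inv_subalg J B \<omega> A"
begin

lemma omega_automorphism: "star_automorphism J B (\<omega> t)"
  using dynamics unfolding cstar_dyn_system_def by auto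

lemma omega_0: "b \<in> B \<Longrightarrow> \<omega> 0 b = b"
  using dynamics unfolding cstar_dyn_system_def by auto

lemma omega_add_time: "b \<in> B \<Longrightarrow> \<omega> (s + t) b = \<omega> s (\<omega> t b)"
  using dynamics unfolding cstar_dyn_system_def by auto

lemma omega_periodic: "b \<in> B \<Longrightarrow> \<omega> (t + 2 * pi) b = \<omega> t b"
  using dynamics unfolding cstar_dyn_system_def by auto

lemma continuous_on_omega: "b \<in> B \<Longrightarrow> continuous_on UNIV (\<lambda>t. \<omega> t b)"
  using dynamics unfolding cstar_dyn_system_def by auto

lemmas omega_closed = aut_closed[OF omega_automorphism]
lemmas omega_add = aut_add[OF omega_automorphism]
lemmas omega_compose = aut_compose[OF omega_automorphism]
lemmas omega_cscale = aut_cscale[OF omega_automorphism]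
lemmas omega_is_adj = aut_is_adj[OF omega_automorphism]
lemmas omega_scaleR = aut_scaleR[OF omega_automorphism]
lemmas omega_norm_le = aut_norm_le[OF omega_automorphism]

lemma A_subalg: "star_subalg J A"
  using A unfolding maximal_abelian_inv_subalg_def abelian_inv_subalg_def by auto

lemma A_subset_B: "A \<subseteq> B"
  using A unfolding maximal_abelian_inv_subalg_def abelian_inv_subalg_def by auto

lemma A_subset_BH: "A \<subseteq> BH J"
  using A_subset_B B_subset_BH by auto

lemma A_commute: "a \<in> A \<Longrightarrow> b \<in> A \<Longrightarrow> a o\<^sub>L b = b o\<^sub>L a"
  using A unfolding maximal_abelian_inv_subalg_def abelian_inv_subalg_def by auto

lemma A_invariant: "a \<in> A \<Longrightarrow> \<omega> t a \<in> A"
  using A unfolding maximal_abelian_inv_subalg_def abelian_inv_subalg_def by blast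

lemma A_maximal: "abelian_inv_subalg J B \<omega> C \<Longrightarrow> A \<subseteq> C \<Longrightarrow> C = A"
  using A unfolding maximal_abelian_inv_subalg_def by auto

lemma A_adj: "a \<in> A \<Longrightarrow> \<exists>s\<in>A. is_adj a s"
  using A_subalg unfolding star_subalg_def by auto

lemma subalg_generated_invariant:
  assumes "G \<subseteq> B" and invariant: "\<And>t g. g \<in> G \<Longrightarrow> \<omega> t g \<in> subalg_generated J G"
    and "c \<in> subalg_generated J G"
  shows "\<omega> t c \<in> subalg_generated J G"
  using assms(3)
proof induction
  case (base g)
  then show ?case by (rule invariant)
next
  case (add a b)
  then have "a \<in> B" "b \<in> B"
    using subalg_generated_subset[OF \<open>G \<subseteq> B\<close>] by auto
  then show ?case
    using add.IH by (simp add: omega_add subalg_generated.add)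
next
  case (compose a b)
  then have "a \<in> B" "b \<in> B"
    using subalg_generated_subset[OF \<open>G \<subseteq> B\<close>] by auto
  then show ?case
    using compose.IH by (simp add: omega_compose subalg_generated.compose)
next
  case (cscale a c)
  then have "a \<in> B"
    using subalg_generated_subset[OF \<open>G \<subseteq> B\<close>] by auto
  then show ?case
    using cscale.IH by (simp add: omega_cscale subalg_generated.cscale)
qed

lemma subset_A_by_maximality:
  assumes "A \<subseteq> G" "G \<subseteq> B"
    and commute: "\<And>g h. g \<in> G \<Longrightarrow> h \<in> G \<Longrightarrow> g o\<^sub>L h = h o\<^sub>L g"
    and adj: "\<And>g. g \<in> G \<Longrightarrow> \<exists>s\<in>G. is_adj g s"
    and invariant: "\<And>t g. g \<in> G \<Longrightarrow> \<omega> t g \<in> subalg_generated J G"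
  shows "G \<subseteq> A"
proof -
  let ?C = "subalg_generated J G"
  have "?C \<subseteq> B"
    using subalg_generated_subset[OF \<open>G \<subseteq> B\<close>] .
  then have "?C \<subseteq> BH J"
    using B_subset_BH by blast
  have "0 \<in> ?C"
    using A_subalg \<open>A \<subseteq> G\<close> by (auto simp: star_subalg_def intro: subalg_generated.base)
  moreover have "\<forall>c\<in>?C. \<exists>s\<in>?C. is_adj c s"
    using subalg_generated_is_adj[OF J \<open>?C \<subseteq> BH J\<close> adj] by blast
  moreover have "\<forall>a\<in>?C. \<forall>c\<in>?C. a o\<^sub>L c = c o\<^sub>L a"
    using subalg_generated_pairwise_commute[OF J \<open>?C \<subseteq> BH J\<close> commute] by blast
  moreover have "\<forall>t. \<omega> t ` ?C \<subseteq> ?C"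
    using subalg_generated_invariant[OF \<open>G \<subseteq> B\<close> invariant] by blast
  ultimately have "abelian_inv_subalg J B \<omega> ?C"
    using \<open>?C \<subseteq> B\<close> \<open>?C \<subseteq> BH J\<close>
    unfolding abelian_inv_subalg_def star_subalg_def
    by (simp add: subalg_generated.add subalg_generated.compose subalg_generated.cscale)
  then have "?C = A"
    using A_maximal \<open>A \<subseteq> G\<close> subalg_generated.base by blast
  then show ?thesis
    using subalg_generated.base by blast
qed

lemma normal_eigenvector_in_A:
  assumes "N \<in> B" "M \<in> B"
    and N_commute: "\<And>a. a \<in> A \<Longrightarrow> N o\<^sub>L a = a o\<^sub>L N" and M_commute: "\<And>a. a \<in> A \<Longrightarrow> M o\<^sub>L a = a o\<^sub>L M"
    and adj: "is_adj N M" and normal: "N o\<^sub>L M = M o\<^sub>L N"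
    and eigen_N: "\<And>t. \<exists>c. \<omega> t N = cscale J c N" and eigen_M: "\<And>t. \<exists>c. \<omega> t M = cscale J c M"
  shows "N \<in> A"
proof -
  have "A \<union> {N, M} \<subseteq> A"
  proof (rule subset_A_by_maximality)
    show "A \<union> {N, M} \<subseteq> B"
      using A_subset_B \<open>N \<in> B\<close> \<open>M \<in> B\<close> by auto
    show "g o\<^sub>L h = h o\<^sub>L g" if "g \<in> A \<union> {N, M}" "h \<in> A \<union> {N, M}" for g h
      using that A_commute N_commute M_commute normal by auto
    show "\<exists>s\<in>A \<union> {N, M}. is_adj g s" if "g \<in> A \<union> {N, M}" for g
      using that A_adj adj is_adj_sym by blast
    show "\<omega> t g \<in> subalg_generated J (A \<union> {N, M})" if "g \<in> A \<union> {N, M}" for t g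
      using that A_invariant eigen_N[of t] eigen_M[of t]
      by (auto intro!: subalg_generated.cscale intro: subalg_generated.base)
  qed auto
  then show ?thesis
    by blast
qed

lemma invariant_selfadjoint_in_A:
  assumes "P \<in> B" and "\<And>a. a \<in> A \<Longrightarrow> P o\<^sub>L a = a o\<^sub>L P" and "is_adj P P" and "\<And>t. \<omega> t P = P"
  shows "P \<in> A"
  using assms by (intro normal_eigenvector_in_A) (auto intro: exI[of _ 1] simp: cscale_one)

end

section \<open>Fourier coefficients of an orbit\<close>

lemma integral_blinfun_compose_left:
  "f integrable_on S \<Longrightarrow> integral S (\<lambda>t. a o\<^sub>L f t) = a o\<^sub>L integral S f"
  using integral_linear[OF _ blinfun_compose.bounded_linear_right] by (simp add: o_def)

lemma integral_blinfun_compose_right: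
  "f integrable_on S \<Longrightarrow> integral S (\<lambda>t. f t o\<^sub>L a) = integral S f o\<^sub>L a"
  using integral_linear[OF _ blinfun_compose.bounded_linear_left] by (simp add: o_def)

lemma bounded_linear_commutator_coeff: "bounded_linear (\<lambda>T. inner (commutator T y u) v)"
proof -
  have "bounded_linear (\<lambda>T. commutator T y)"
    unfolding commutator_def
    by (intro bounded_linear_sub blinfun_compose.bounded_linear_left blinfun_compose.bounded_linear_right)
  then show ?thesis
    by (intro bounded_linear_compose[OF bounded_linear_inner_left] bounded_linear_compose[OF blinfun.bounded_linear_left])
qed

lemma commute_compose:
  "X o\<^sub>L a = a o\<^sub>L X \<Longrightarrow> Y o\<^sub>L a = a o\<^sub>L Y \<Longrightarrow> (Y o\<^sub>L X) o\<^sub>L a = a o\<^sub>L (Y o\<^sub>L X)"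
  by (simp add: blinfun_compose_assoc) (simp flip: blinfun_compose_assoc)

context cstar_dynamical_system
begin

lemma omega_commute_A:
  assumes "x \<in> B" and x_commute: "\<And>a. a \<in> A \<Longrightarrow> x o\<^sub>L a = a o\<^sub>L x" and "a \<in> A"
  shows "\<omega> t x o\<^sub>L a = a o\<^sub>L \<omega> t x"
proof -
  have "\<omega> (- t) a \<in> A" "\<omega> (- t) a \<in> B"
    using A_invariant \<open>a \<in> A\<close> A_subset_B by auto
  moreover have "\<omega> t (\<omega> (- t) a) = a"
    using omega_add_time[of a t "- t"] omega_0[of a] \<open>a \<in> A\<close> A_subset_B by auto
  ultimately show ?thesis
    using omega_compose[OF \<open>x \<in> B\<close>, of "\<omega> (- t) a" t] omega_compose[OF _ \<open>x \<in> B\<close>, of "\<omega> (- t) a" t]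
      x_commute[of "\<omega> (- t) a"] by simp
qed

lemma adjoint_commute_A:
  assumes adj: "is_adj X Y" and X_commute: "\<And>a. a \<in> A \<Longrightarrow> X o\<^sub>L a = a o\<^sub>L X" and "a \<in> A"
  shows "Y o\<^sub>L a = a o\<^sub>L Y"
proof -
  obtain a' where "a' \<in> A" and adj_a: "is_adj a a'"
    using A_adj[OF \<open>a \<in> A\<close>] by blast
  have "is_adj (X o\<^sub>L a') (a o\<^sub>L Y)"
    using is_adj_compose[OF adj is_adj_sym[OF adj_a]] .
  moreover have "is_adj (X o\<^sub>L a') (Y o\<^sub>L a)"
    using is_adj_compose[OF is_adj_sym[OF adj_a] adj] X_commute[OF \<open>a' \<in> A\<close>] by simp
  ultimately show ?thesis
    by (rule is_adj_unique[symmetric])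
qed

lemma eigenvector_in_A:
  assumes "X \<in> B" and X_commute: "\<And>a. a \<in> A \<Longrightarrow> X o\<^sub>L a = a o\<^sub>L X"
    and eigen: "\<And>t. \<omega> t X = cscale J (cis (\<theta> t)) X"
  shows "X \<in> A"
proof -
  obtain Y where "Y \<in> B" and adj: "is_adj X Y"
    using B_adj[OF \<open>X \<in> B\<close>] by blast
  have "X \<in> BH J" "Y \<in> BH J"
    using \<open>X \<in> B\<close> \<open>Y \<in> B\<close> B_subset_BH by auto
  have Y_commute: "Y o\<^sub>L a = a o\<^sub>L Y" if "a \<in> A" for a
    using adjoint_commute_A[OF adj X_commute that] .
  have eigen_Y: "\<omega> t Y = cscale J (cnj (cis (\<theta> t))) Y" for t
  proof -
    have "is_adj (cscale J (cis (\<theta> t)) X) (\<omega> t Y)"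
      using omega_is_adj[OF \<open>X \<in> B\<close> \<open>Y \<in> B\<close> adj, of t] by (simp add: eigen)
    then show ?thesis
      using is_adj_cscale[OF J \<open>X \<in> BH J\<close> adj] by (rule is_adj_unique)
  qed
  have unimodular: "cnj (cis (\<theta> t)) * cis (\<theta> t) = 1" for t
    by (simp add: cis_cnj cis_mult)
  have "Y o\<^sub>L X \<in> A"
  proof (rule invariant_selfadjoint_in_A)
    show "\<omega> t (Y o\<^sub>L X) = Y o\<^sub>L X" for t
      using \<open>X \<in> B\<close> \<open>Y \<in> B\<close> unimodular[of t]
      by (simp add: omega_compose eigen eigen_Y cscale_compose_left[OF J]
          compose_cscale_right[OF J \<open>Y \<in> BH J\<close>] cscale_cscale[OF J] cscale_one)
    show "Y o\<^sub>L X \<in> B" "is_adj (Y o\<^sub>L X) (Y o\<^sub>L X)"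
      using \<open>X \<in> B\<close> \<open>Y \<in> B\<close> B_compose is_adj_selfadjoint_compose[OF adj] by auto
  qed (simp add: commute_compose X_commute Y_commute)
  moreover have "X o\<^sub>L Y \<in> A"
  proof (rule invariant_selfadjoint_in_A)
    show "\<omega> t (X o\<^sub>L Y) = X o\<^sub>L Y" for t
      using \<open>X \<in> B\<close> \<open>Y \<in> B\<close> unimodular[of t]
      by (simp add: omega_compose eigen eigen_Y cscale_compose_left[OF J]
          compose_cscale_right[OF J \<open>X \<in> BH J\<close>] cscale_cscale[OF J] cscale_one mult.commute)
    show "X o\<^sub>L Y \<in> B" "is_adj (X o\<^sub>L Y) (X o\<^sub>L Y)"
      using \<open>X \<in> B\<close> \<open>Y \<in> B\<close> B_compose is_adj_selfadjoint_compose[OF is_adj_sym[OF adj]] by auto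
  qed (simp add: commute_compose X_commute Y_commute)
  ultimately have "X o\<^sub>L Y = Y o\<^sub>L X"
    by (intro normal_if_commutes_with_products[OF adj] X_commute)
  then show ?thesis
    using normal_eigenvector_in_A[OF \<open>X \<in> B\<close> \<open>Y \<in> B\<close> X_commute Y_commute adj] eigen eigen_Y by blast
qed

context
  fixes x :: "'h \<Rightarrow>\<^sub>L 'h"
  assumes x: "x \<in> B" and x_commute: "\<And>a. a \<in> A \<Longrightarrow> x o\<^sub>L a = a o\<^sub>L x"
begin

definition orbit_integral :: "(real \<Rightarrow> real) \<Rightarrow> ('h \<Rightarrow>\<^sub>L 'h)" where
  "orbit_integral g = integral {0..2*pi} (\<lambda>t. g t *\<^sub>R \<omega> t x)"

lemma integrable_orbit:
  assumes "continuous_on UNIV g"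
  shows "(\<lambda>t. g t *\<^sub>R \<omega> t x) integrable_on {a..b}"
proof -
  have "continuous_on UNIV (\<lambda>t. g t *\<^sub>R \<omega> t x)"
    using assms continuous_on_omega[OF x] by (rule continuous_on_scaleR)
  from continuous_on_subset[OF this subset_UNIV] show ?thesis
    by (rule integrable_continuous_real)
qed

lemma orbit_integral_in_B:
  assumes "continuous_on UNIV g"
  shows "orbit_integral g \<in> B"
  unfolding orbit_integral_def
  by (rule has_integral_in_closed_subspace[OF B_subspace B_closed integrable_integral[OF integrable_orbit[OF assms]]])
    (use x in \<open>auto intro: B_scaleR omega_closed\<close>)

lemma omega_orbit_integral:
  assumes g: "continuous_on UNIV g" and periodic: "\<And>t. g (t + 2 * pi) = g t"
  shows "\<omega> s (orbit_integral g) = orbit_integral (\<lambda>t. g (t - s))"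
proof -
  have "((\<lambda>t. \<omega> s (g t *\<^sub>R \<omega> t x)) has_integral \<omega> s (orbit_integral g)) {0..2*pi}"
    unfolding orbit_integral_def
    by (rule has_integral_linear_on[where C = 1, OF B_subspace B_closed integrable_integral[OF integrable_orbit[OF g]]])
      (use x in \<open>auto intro: B_scaleR omega_closed simp: omega_add omega_scaleR omega_norm_le\<close>)
  then have "\<omega> s (orbit_integral g) = integral {0..2*pi} (\<lambda>t. g t *\<^sub>R \<omega> (s + t) x)"
    using x by (simp add: omega_scaleR omega_closed integral_unique flip: omega_add_time)
  also have "\<dots> = integral {0..2*pi} (\<lambda>t. g (t - s) *\<^sub>R \<omega> t x)"
  proof -
    have "continuous_on UNIV (\<lambda>t. g (t - s) *\<^sub>R \<omega> t x)"
      using x by (intro continuous_intros continuous_on_compose2[OF g] continuous_on_omega) auto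
    moreover have "g (t + 2 * pi - s) *\<^sub>R \<omega> (t + 2 * pi) x = g (t - s) *\<^sub>R \<omega> t x" for t
      using periodic[of "t - s"] omega_periodic[OF x] by (simp add: algebra_simps)
    ultimately show ?thesis
      using integral_shift_periodic[of "\<lambda>t. g (t - s) *\<^sub>R \<omega> t x" "2 * pi" s] by (simp add: add.commute)
  qed
  finally show ?thesis
    by (simp add: orbit_integral_def)
qed

lemma orbit_integral_linear:
  assumes "continuous_on UNIV g" "continuous_on UNIV h"
  shows "orbit_integral (\<lambda>t. c * g t + d * h t) = c *\<^sub>R orbit_integral g + d *\<^sub>R orbit_integral h"
proof -
  have "orbit_integral (\<lambda>t. c * g t + d * h t)
      = integral {0..2*pi} (\<lambda>t. c *\<^sub>R (g t *\<^sub>R \<omega> t x) + d *\<^sub>R (h t *\<^sub>R \<omega> t x))"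
    by (simp add: orbit_integral_def scaleR_add_left)
  also have "\<dots> = integral {0..2*pi} (\<lambda>t. c *\<^sub>R (g t *\<^sub>R \<omega> t x)) + integral {0..2*pi} (\<lambda>t. d *\<^sub>R (h t *\<^sub>R \<omega> t x))"
    using assms by (intro integral_add integrable_cmul integrable_orbit)
  finally show ?thesis
    by (simp only: integral_cmul orbit_integral_def)
qed

lemma orbit_integral_commute_A:
  assumes "continuous_on UNIV g" and "a \<in> A"
  shows "orbit_integral g o\<^sub>L a = a o\<^sub>L orbit_integral g"
  unfolding orbit_integral_def
  using omega_commute_A[OF x x_commute \<open>a \<in> A\<close>] integrable_orbit[OF assms(1)]
  by (simp add: blinfun_compose.scaleR_left blinfun_compose.scaleR_right
      flip: integral_blinfun_compose_left integral_blinfun_compose_right)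

definition fourier_cos :: "int \<Rightarrow> ('h \<Rightarrow>\<^sub>L 'h)" where
  "fourier_cos n = orbit_integral (\<lambda>t. cos (real_of_int n * t))"

definition fourier_sin :: "int \<Rightarrow> ('h \<Rightarrow>\<^sub>L 'h)" where
  "fourier_sin n = orbit_integral (\<lambda>t. sin (real_of_int n * t))"

text \<open>The Fourier coefficient \<open>\<integral>\<^sub>0\<^sup>2\<^sup>\<pi> e\<^sup>-\<^sup>i\<^sup>n\<^sup>t \<omega>\<^sub>t(x) dt\<close>, with \<open>J\<close> acting as \<open>i\<close>.\<close>
definition fourier_coeff :: "int \<Rightarrow> ('h \<Rightarrow>\<^sub>L 'h)" where
  "fourier_coeff n = fourier_cos n + cscale J (- \<i>) (fourier_sin n)"

lemma continuous_on_cos_sin: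
  "continuous_on UNIV (\<lambda>t. cos (real_of_int n * t))" "continuous_on UNIV (\<lambda>t. sin (real_of_int n * t))"
  by (intro continuous_intros)+

lemma periodic_cos_sin:
  "cos (real_of_int n * (t + 2 * pi)) = cos (real_of_int n * t)"
  "sin (real_of_int n * (t + 2 * pi)) = sin (real_of_int n * t)"
  using cos.plus_of_int[of "real_of_int n * t" n] sin.plus_of_int[of "real_of_int n * t" n]
  by (simp_all add: algebra_simps)

lemma fourier_cos_sin_in_B: "fourier_cos n \<in> B" "fourier_sin n \<in> B"
  unfolding fourier_cos_def fourier_sin_def by (intro orbit_integral_in_B continuous_on_cos_sin)+

lemma omega_fourier_cos:
  "\<omega> s (fourier_cos n) = cos (real_of_int n * s) *\<^sub>R fourier_cos n + sin (real_of_int n * s) *\<^sub>R fourier_sin n"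
proof -
  have "\<omega> s (fourier_cos n) = orbit_integral (\<lambda>t. cos (real_of_int n * (t - s)))"
    unfolding fourier_cos_def by (intro omega_orbit_integral continuous_on_cos_sin periodic_cos_sin)
  also have "(\<lambda>t. cos (real_of_int n * (t - s)))
      = (\<lambda>t. cos (real_of_int n * s) * cos (real_of_int n * t) + sin (real_of_int n * s) * sin (real_of_int n * t))"
    by (simp add: right_diff_distrib cos_diff mult.commute)
  finally show ?thesis
    by (simp add: orbit_integral_linear continuous_on_cos_sin fourier_cos_def fourier_sin_def)
qed

lemma omega_fourier_sin:
  "\<omega> s (fourier_sin n) = cos (real_of_int n * s) *\<^sub>R fourier_sin n - sin (real_of_int n * s) *\<^sub>R fourier_cos n"
proof -
  have "\<omega> s (fourier_sin n) = orbit_integral (\<lambda>t. sin (real_of_int n * (t - s)))"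
    unfolding fourier_sin_def by (intro omega_orbit_integral continuous_on_cos_sin periodic_cos_sin)
  also have "(\<lambda>t. sin (real_of_int n * (t - s)))
      = (\<lambda>t. cos (real_of_int n * s) * sin (real_of_int n * t) + (- sin (real_of_int n * s)) * cos (real_of_int n * t))"
    by (simp add: right_diff_distrib sin_diff mult.commute)
  also have "orbit_integral \<dots> = cos (real_of_int n * s) *\<^sub>R fourier_sin n + (- sin (real_of_int n * s)) *\<^sub>R fourier_cos n"
    unfolding fourier_cos_def fourier_sin_def by (intro orbit_integral_linear continuous_on_cos_sin)
  finally show ?thesis
    by simp
qed

lemma omega_fourier_coeff: "\<omega> s (fourier_coeff n) = cscale J (cis (real_of_int n * s)) (fourier_coeff n)"
  unfolding fourier_coeff_def using fourier_cos_sin_in_B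
  by (intro blinfun_eqI) (simp add: omega_add omega_cscale B_cscale omega_fourier_cos omega_fourier_sin
      cscale_apply[OF J] blinfun.add_left blinfun.diff_left blinfun.scaleR_left cstruct_linear_simps[OF J]
      cstruct_J_J[OF J] algebra_simps)

lemma fourier_coeff_commute_A: "a \<in> A \<Longrightarrow> fourier_coeff n o\<^sub>L a = a o\<^sub>L fourier_coeff n"
  unfolding fourier_coeff_def fourier_cos_def fourier_sin_def
  using A_subset_BH
  by (auto simp: blinfun_compose.add_left blinfun_compose.add_right cscale_compose_left[OF J]
      compose_cscale_right[OF J] orbit_integral_commute_A continuous_on_cos_sin)

lemma fourier_coeff_in_B: "fourier_coeff n \<in> B"
  unfolding fourier_coeff_def by (intro B_add B_cscale fourier_cos_sin_in_B)

lemma fourier_coeff_in_A: "fourier_coeff n \<in> A"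
  by (rule eigenvector_in_A[OF fourier_coeff_in_B fourier_coeff_commute_A omega_fourier_coeff])

lemma fourier_coeff_add_uminus: "fourier_coeff n + fourier_coeff (- n) = 2 *\<^sub>R fourier_cos n"
  and fourier_coeff_diff_uminus: "fourier_coeff n - fourier_coeff (- n) = 2 *\<^sub>R cscale J (- \<i>) (fourier_sin n)"
proof -
  have "fourier_cos (- n) = fourier_cos n" "fourier_sin (- n) = - fourier_sin n"
    by (simp_all add: fourier_cos_def fourier_sin_def orbit_integral_def integral_neg)
  then show "fourier_coeff n + fourier_coeff (- n) = 2 *\<^sub>R fourier_cos n"
    and "fourier_coeff n - fourier_coeff (- n) = 2 *\<^sub>R cscale J (- \<i>) (fourier_sin n)"
    unfolding fourier_coeff_def
    by (auto intro!: blinfun_eqI simp: cscale_apply[OF J] blinfun.add_left blinfun.diff_left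
        blinfun.minus_left blinfun.scaleR_left cstruct_linear_simps[OF J] scaleR_2)
qed

lemma commutant_commutes_fourier:
  assumes "y \<in> commutant J A"
  shows "fourier_cos n o\<^sub>L y = y o\<^sub>L fourier_cos n" "fourier_sin n o\<^sub>L y = y o\<^sub>L fourier_sin n"
proof -
  have "y \<in> BH J" and coeff: "fourier_coeff m o\<^sub>L y = y o\<^sub>L fourier_coeff m" for m
    using assms fourier_coeff_in_A unfolding commutant_def by auto
  have "(2 *\<^sub>R fourier_cos n) o\<^sub>L y = y o\<^sub>L (2 *\<^sub>R fourier_cos n)"
    using coeff[of n] coeff[of "- n"] unfolding fourier_coeff_add_uminus[symmetric]
    by (simp add: blinfun_compose.add_left blinfun_compose.add_right)
  then show "fourier_cos n o\<^sub>L y = y o\<^sub>L fourier_cos n"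
    by (simp add: blinfun_compose.scaleR_left blinfun_compose.scaleR_right)
  have "(2 *\<^sub>R cscale J (- \<i>) (fourier_sin n)) o\<^sub>L y = y o\<^sub>L (2 *\<^sub>R cscale J (- \<i>) (fourier_sin n))"
    using coeff[of n] coeff[of "- n"] unfolding fourier_coeff_diff_uminus[symmetric]
    by (simp add: blinfun_compose.diff_left blinfun_compose.diff_right)
  then have "cscale J (- \<i>) (fourier_sin n o\<^sub>L y) = cscale J (- \<i>) (y o\<^sub>L fourier_sin n)"
    by (simp add: blinfun_compose.scaleR_left blinfun_compose.scaleR_right cscale_compose_left[OF J]
        compose_cscale_right[OF J \<open>y \<in> BH J\<close>])
  then have "cscale J \<i> (cscale J (- \<i>) (fourier_sin n o\<^sub>L y)) = cscale J \<i> (cscale J (- \<i>) (y o\<^sub>L fourier_sin n))"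
    by simp
  then show "fourier_sin n o\<^sub>L y = y o\<^sub>L fourier_sin n"
    by (simp add: cscale_cscale[OF J] cscale_one)
qed

lemma integral_commutator_coeff:
  assumes g: "continuous_on UNIV g" and "orbit_integral g o\<^sub>L y = y o\<^sub>L orbit_integral g"
  shows "integral {0..2*pi} (\<lambda>t. g t * inner (commutator (\<omega> t x) y u) v) = 0"
proof -
  let ?L = "\<lambda>T. inner (commutator T y u) v"
  have "integral {0..2*pi} (\<lambda>t. g t * inner (commutator (\<omega> t x) y u) v)
      = integral {0..2*pi} (?L \<circ> (\<lambda>t. g t *\<^sub>R \<omega> t x))"
    by (simp add: o_def commutator_scaleR_left blinfun.scaleR_left)
  also have "\<dots> = inner (commutator (orbit_integral g) y u) v"
    unfolding orbit_integral_def by (rule integral_linear[OF integrable_orbit[OF g] bounded_linear_commutator_coeff])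
  also have "\<dots> = 0"
    using assms(2) by (simp add: commutator_def)
  finally show ?thesis .
qed

lemma commutes_with_commutant:
  assumes "y \<in> commutant J A"
  shows "x o\<^sub>L y = y o\<^sub>L x"
proof (rule blinfun_eqI)
  fix u
  have "inner (commutator (\<omega> 0 x) y u) v = 0" for v
  proof (rule periodic_eq_0_if_Fourier_coefficients_eq_0[where \<phi> = "\<lambda>t. inner (commutator (\<omega> t x) y u) v"])
    show "continuous_on UNIV (\<lambda>t. inner (commutator (\<omega> t x) y u) v)"
      by (rule continuous_on_compose2[OF linear_continuous_on[OF bounded_linear_commutator_coeff]
          continuous_on_omega[OF x]]) auto
    show "inner (commutator (\<omega> (t + 2 * pi) x) y u) v = inner (commutator (\<omega> t x) y u) v" for t
      using omega_periodic[OF x] by simp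
    show "integral {0..2*pi} (\<lambda>t. cos (real_of_int n * t) * inner (commutator (\<omega> t x) y u) v) = 0"
      and "integral {0..2*pi} (\<lambda>t. sin (real_of_int n * t) * inner (commutator (\<omega> t x) y u) v) = 0" for n
      using commutant_commutes_fourier[OF assms]
      by (auto intro!: integral_commutator_coeff continuous_on_cos_sin simp: fourier_cos_def fourier_sin_def)
  qed simp
  then have "inner ((x o\<^sub>L y) u - (y o\<^sub>L x) u) v = 0" for v
    using omega_0[OF x] by (simp add: commutator_def blinfun.diff_left)
  then show "(x o\<^sub>L y) u = (y o\<^sub>L x) u"
    by (metis inner_eq_zero_iff right_minus_eq)
qed

end

end

theorem proposition2p6:
  fixes J :: "'h::{real_inner, complete_space} \<Rightarrow> 'h"
    and B A :: "('h \<Rightarrow>\<^sub>L 'h) set"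
    and \<omega> :: "real \<Rightarrow> ('h \<Rightarrow>\<^sub>L 'h) \<Rightarrow> ('h \<Rightarrow>\<^sub>L 'h)"
  assumes "cstruct J"
    and "cstar_dyn_system J B \<omega>"
    and "maximal_abelian_inv_subalg J B \<omega> A"
  shows "commutant J A \<inter> B \<subseteq> commutant J (commutant J A)"
proof
  interpret cstar_dynamical_system J B \<omega> A
    using assms by unfold_locales (auto simp: cstar_dyn_system_def)
  fix x assume "x \<in> commutant J A \<inter> B"
  then have "x \<in> B" "x \<in> BH J" "\<And>a. a \<in> A \<Longrightarrow> x o\<^sub>L a = a o\<^sub>L x"
    by (auto simp: commutant_def)
  then show "x \<in> commutant J (commutant J A)"
    using commutes_with_commutant unfolding commutant_def[of J "commutant J A"] by blast
qed

end
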